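(* Let $\mathscr{A}$ be a $C^*$-algebra, let $\mathscr{X},\mathscr{Y}$ be inner product (pre-Hilbert) $\mathscr{A}$-modules, let $T\colon\mathscr{X}\to\mathscr{Y}$ be a nonvanishing mapping, and let $\gamma\in(0,+\infty)$. Then the following are equivalent: (i) $\langle Tx,Ty\rangle=\gamma^2\langle x,y\rangle$ for all $x,y\in\mathscr{X}$; (ii) $T$ is $\mathscr{A}$-linear and $|Tx|=\gamma|x|$ for all $x\in\mathscr{X}$; (iii) $T$ is ($\mathbb{C}$-)linear and $|Tx|=\gamma|x|$ for all $x\in\mathscr{X}$.
   Context: An inner product $\mathscr{A}$-module is a right $\mathscr{A}$-module $\mathscr{X}$ (complex vector space with compatible right $\mathscr{A}$-action) with an $\mathscr{A}$-valued map $\langle\cdot,\cdot\rangle$ that is linear in the second variable, satisfies $\langle x,ya\rangle=\langle x,y\rangle a$, $\langle x,y\rangle=\langle y,x\rangle^*$, and $\langle x,x\rangle\ge0$ with equality iff $x=0$; completeness is not assumed. For $z$ in such a module, $|z|$ denotes the positive square root of $\langle z,z\rangle$. $T$ is $\mathscr{A}$-linear if it is linear and $T(xa)=(Tx)a$ for all $x$ and $a\in\mathscr{A}$. Nonvanishing means $T$ is not identically zero. *)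

theory Defs
  imports "HOL-Analysis.Analysis"
begin

definition complex_vs :: "(complex \<Rightarrow> 'v::ab_group_add \<Rightarrow> 'v) \<Rightarrow> bool" where
  "complex_vs sm \<longleftrightarrow>
     (\<forall>c x y. sm c (x + y) = sm c x + sm c y) \<and>
     (\<forall>c d x. sm (c + d) x = sm c x + sm d x) \<and>
     (\<forall>c d x. sm (c * d) x = sm c (sm d x)) \<and>
     (\<forall>x. sm 1 x = x)"

text \<open>A C*-algebra: a (not necessarily unital) Banach algebra (type class gives the real
  Banach algebra structure: associative multiplication, submultiplicative norm, completeness),
  whose complex scalar multiplication is sm, together with an involution st satisfying the
  C*-identity.\<close>
definition cstar_algebra ::
  "(complex \<Rightarrow> 'a::{real_normed_algebra,banach} \<Rightarrow> 'a) \<Rightarrow> ('a \<Rightarrow> 'a) \<Rightarrow> bool" where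
  "cstar_algebra sm st \<longleftrightarrow>
     complex_vs sm \<and>
     (\<forall>r a. sm (complex_of_real r) a = scaleR r a) \<and>
     (\<forall>c a b. sm c (a * b) = sm c a * b \<and> sm c (a * b) = a * sm c b) \<and>
     (\<forall>c a. norm (sm c a) = cmod c * norm a) \<and>
     (\<forall>a b. st (a + b) = st a + st b) \<and>
     (\<forall>c a. st (sm c a) = sm (cnj c) (st a)) \<and>
     (\<forall>a b. st (a * b) = st b * st a) \<and>
     (\<forall>a. st (st a) = a) \<and>
     (\<forall>a. norm (st a * a) = (norm a)\<^sup>2)"

definition cstar_positive :: "('a::{real_normed_algebra,banach} \<Rightarrow> 'a) \<Rightarrow> 'a \<Rightarrow> bool" where
  "cstar_positive st a \<longleftrightarrow> (\<exists>b. a = st b * b)"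

definition cstar_sqrt :: "('a::{real_normed_algebra,banach} \<Rightarrow> 'a) \<Rightarrow> 'a \<Rightarrow> 'a" where
  "cstar_sqrt st a = (THE b. cstar_positive st b \<and> b * b = a)"

text \<open>Inner product (pre-Hilbert) A-module: complex vector space X (scalar multiplication smX),
  right A-action act, A-valued inner product ip (no completeness).\<close>
definition ip_module ::
  "(complex \<Rightarrow> 'a::{real_normed_algebra,banach} \<Rightarrow> 'a) \<Rightarrow> ('a \<Rightarrow> 'a) \<Rightarrow>
   (complex \<Rightarrow> 'x::ab_group_add \<Rightarrow> 'x) \<Rightarrow> ('x \<Rightarrow> 'a \<Rightarrow> 'x) \<Rightarrow> ('x \<Rightarrow> 'x \<Rightarrow> 'a) \<Rightarrow> bool" where
  "ip_module sm st smX act ip \<longleftrightarrow>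
     complex_vs smX \<and>
     (\<forall>x y a. act (x + y) a = act x a + act y a) \<and>
     (\<forall>x a b. act x (a + b) = act x a + act x b) \<and>
     (\<forall>x a b. act x (a * b) = act (act x a) b) \<and>
     (\<forall>c x a. smX c (act x a) = act (smX c x) a \<and> smX c (act x a) = act x (sm c a)) \<and>
     (\<forall>x y z. ip x (y + z) = ip x y + ip x z) \<and>
     (\<forall>c x y. ip x (smX c y) = sm c (ip x y)) \<and>
     (\<forall>x y a. ip x (act y a) = ip x y * a) \<and>
     (\<forall>x y. ip x y = st (ip y x)) \<and>
     (\<forall>x. cstar_positive st (ip x x)) \<and>
     (\<forall>x. ip x x = 0 \<longleftrightarrow> x = 0)"

definition mod_abs :: "('a::{real_normed_algebra,banach} \<Rightarrow> 'a) \<Rightarrow> ('x \<Rightarrow> 'x \<Rightarrow> 'a) \<Rightarrow> 'x \<Rightarrow> 'a" where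
  "mod_abs st ip z = cstar_sqrt st (ip z z)"

definition clinear_map ::
  "(complex \<Rightarrow> 'x::ab_group_add \<Rightarrow> 'x) \<Rightarrow> (complex \<Rightarrow> 'y::ab_group_add \<Rightarrow> 'y) \<Rightarrow> ('x \<Rightarrow> 'y) \<Rightarrow> bool" where
  "clinear_map smX smY T \<longleftrightarrow>
     (\<forall>x y. T (x + y) = T x + T y) \<and> (\<forall>c x. T (smX c x) = smY c (T x))"

definition Alinear_map ::
  "(complex \<Rightarrow> 'x::ab_group_add \<Rightarrow> 'x) \<Rightarrow> ('x \<Rightarrow> 'a \<Rightarrow> 'x) \<Rightarrow>
   (complex \<Rightarrow> 'y::ab_group_add \<Rightarrow> 'y) \<Rightarrow> ('y \<Rightarrow> 'a \<Rightarrow> 'y) \<Rightarrow> ('x \<Rightarrow> 'y) \<Rightarrow> bool" where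
  "Alinear_map smX actX smY actY T \<longleftrightarrow>
     clinear_map smX smY T \<and> (\<forall>x a. T (actX x a) = actY (T x) a)"

end

theory Submission
  imports Defs "HOL-Computational_Algebra.Fundamental_Theorem_Algebra"
begin

text \<open>
  Polarization recovers \<open>\<langle>T x, T y\<rangle>\<close> from the values \<open>\<langle>T z, T z\<rangle>\<close> when \<open>T\<close> is
  \<open>\<complex>\<close>-linear, which gives (iii) \<open>\<Rightarrow>\<close> (i). Conversely, under (i) the vector
  \<open>T (x a) - (T x) a\<close> has the same inner products with \<open>T (x a)\<close> and with \<open>(T x) a\<close>, so it
  vanishes and \<open>T\<close> is \<open>\<A>\<close>-linear; sums and scalar multiples are handled in the same way.

  What remains is to see that \<open>|T x| = \<gamma> |x|\<close> means \<open>\<langle>T x, T x\<rangle> = \<gamma>\<^sup>2 \<langle>x, x\<rangle>\<close>, i.e. that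
  every element \<open>b\<^sup>* b\<close> of a C*-algebra has exactly one square root of the form \<open>d\<^sup>* d\<close>. This is
  proved in the unitization. Rickart's elementary argument shows that the norm of a self-adjoint
  \<open>h\<close> is attained on its (real) spectrum, so \<open>\<parallel>p(h)\<parallel> \<le> max \<bar>p\<bar>\<close> on \<open>[-\<parallel>h\<parallel>, \<parallel>h\<parallel>]\<close> for
  real polynomials \<open>p\<close>, and Weierstrass approximation turns this into a continuous functional
  calculus. In it, Kaplansky's argument shows that \<open>b\<^sup>* b\<close> has no negative part, the square root
  is \<open>\<surd>(b\<^sup>* b)\<close>, and uniqueness follows because \<open>c\<^sup>* c + d\<^sup>* d = 0\<close> forces \<open>c = 0\<close>.
\<close>

section \<open>Real polynomials and elementary estimates\<close>

lemma frac_le_twice: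
  fixes t :: real
  assumes "0 \<le> t" "t \<le> 1/2"
  shows "t / (1 - t) \<le> 2 * t"
proof -
  have "0 \<le> t * (1 - 2 * t)" using assms by simp
  then show ?thesis using assms by (simp add: divide_le_eq algebra_simps)
qed

lemma pow2_mult_tendsto_0:
  fixes a :: "nat \<Rightarrow> real"
  assumes "\<And>k. k \<ge> k0 \<Longrightarrow> r^(2^k) * a k \<le> 1" "\<And>k. 0 \<le> a k" "0 \<le> s" "s < r"
  shows "(\<lambda>k. s^(2^k) * a k) \<longlonglongrightarrow> 0"
proof (rule tendsto_sandwich[OF _ _ tendsto_const])
  define q where "q = s / r"
  have q: "0 \<le> q" "q < 1" using assms(3,4) unfolding q_def by auto
  show "(\<lambda>k. q^k) \<longlonglongrightarrow> 0" using q by (simp add: LIMSEQ_power_zero)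
  show "\<forall>\<^sub>F k in sequentially. 0 \<le> s^(2^k) * a k" using assms(2,3) by simp
  show "\<forall>\<^sub>F k in sequentially. s^(2^k) * a k \<le> q^k"
  proof (rule eventually_sequentiallyI[of k0])
    fix k assume "k0 \<le> k"
    have "s^(2^k) * a k = q^(2^k) * (r^(2^k) * a k)"
      using assms(3,4) unfolding q_def by (simp add: power_divide)
    also have "\<dots> \<le> q^(2^k)" using assms(1)[OF \<open>k0 \<le> k\<close>] q by (simp add: mult_left_le)
    also have "\<dots> \<le> q^k" using q by (simp add: power_decreasing less_imp_le)
    finally show "s^(2^k) * a k \<le> q^k" .
  qed
qed

definition real_poly :: "complex poly \<Rightarrow> bool" where
  "real_poly p \<longleftrightarrow> (\<forall>i. Im (coeff p i) = 0)"

lemma real_poly_map_cnj: "real_poly p \<Longrightarrow> map_poly cnj p = p"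
  unfolding real_poly_def by (intro poly_eqI) (simp add: coeff_map_poly complex_eq_iff)

lemma real_poly_add: "real_poly p \<Longrightarrow> real_poly q \<Longrightarrow> real_poly (p + q)"
  unfolding real_poly_def by simp

lemma real_poly_minus: "real_poly p \<Longrightarrow> real_poly (- p)"
  unfolding real_poly_def by simp

lemma real_poly_const: "real_poly [:of_real c:]"
  unfolding real_poly_def by (simp add: coeff_pCons split: nat.split)

lemma real_poly_X: "real_poly [:0, 1:]"
  unfolding real_poly_def by (simp add: coeff_pCons split: nat.split)

lemma real_poly_mult: "real_poly p \<Longrightarrow> real_poly q \<Longrightarrow> real_poly (p * q)"
  unfolding real_poly_def by (simp add: coeff_mult Im_sum)

definition poly_approx :: "real \<Rightarrow> (real \<Rightarrow> real) \<Rightarrow> complex poly \<Rightarrow> real \<Rightarrow> bool" where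
  "poly_approx M f p \<epsilon> \<longleftrightarrow>
     real_poly p \<and> (\<forall>t. \<bar>t\<bar> \<le> M \<longrightarrow> cmod (of_real (f t) - poly p (of_real t)) \<le> \<epsilon>)"

lemma poly_approx_mono: "poly_approx M f p \<epsilon> \<Longrightarrow> \<epsilon> \<le> \<delta> \<Longrightarrow> poly_approx M f p \<delta>"
  unfolding poly_approx_def by force

lemma poly_approx_add:
  assumes "poly_approx M f p \<epsilon>" "poly_approx M g q \<delta>"
  shows "poly_approx M (\<lambda>t. f t + g t) (p + q) (\<epsilon> + \<delta>)"
  unfolding poly_approx_def
proof (intro conjI allI impI)
  show "real_poly (p + q)" using assms real_poly_add unfolding poly_approx_def by blast
  fix t :: real assume t: "\<bar>t\<bar> \<le> M"
  have "cmod (of_real (f t + g t) - poly (p + q) (of_real t))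
      \<le> cmod (of_real (f t) - poly p (of_real t)) + cmod (of_real (g t) - poly q (of_real t))"
    by (rule order_trans[OF _ norm_triangle_ineq]) (simp add: algebra_simps)
  then show "cmod (of_real (f t + g t) - poly (p + q) (of_real t)) \<le> \<epsilon> + \<delta>"
    using assms t unfolding poly_approx_def by force
qed

lemma poly_approx_minus:
  assumes "poly_approx M f p \<epsilon>"
  shows "poly_approx M (\<lambda>t. - f t) (- p) \<epsilon>"
proof -
  have "cmod (of_real (- f t) - poly (- p) (of_real t)) = cmod (of_real (f t) - poly p (of_real t))"
    for t
    using norm_minus_commute[of "of_real (f t)" "poly p (of_real t)"] by simp
  then show ?thesis using assms real_poly_minus unfolding poly_approx_def by simp
qed

lemma poly_approx_bound:
  assumes "poly_approx M f p \<epsilon>" "\<bar>t\<bar> \<le> M"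
  shows "cmod (poly p (of_real t)) \<le> \<bar>f t\<bar> + \<epsilon>"
proof -
  have "cmod (poly p (of_real t)) \<le> cmod (of_real (f t) :: complex) + cmod (of_real (f t) - poly p (of_real t))"
    using norm_triangle_sub[of "poly p (of_real t)" "of_real (f t)"] by (simp add: norm_minus_commute)
  then show ?thesis using assms unfolding poly_approx_def by fastforce
qed

lemma real_poly_approx:
  assumes f: "continuous_on {-M..M} f" and \<epsilon>: "\<epsilon> > 0"
  shows "\<exists>p. poly_approx M f p \<epsilon>"
proof -
  obtain g where g: "real_polynomial_function g" "\<And>x. x \<in> {-M..M} \<Longrightarrow> \<bar>f x - g x\<bar> < \<epsilon>"
    using Stone_Weierstrass_real_polynomial_function[OF compact_Icc f \<epsilon>] by blast
  obtain a n where g_eq: "g = (\<lambda>x. \<Sum>i\<le>n. a i * x^i)"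
    using g(1) real_polynomial_function_iff_sum by blast
  define p where "p = (\<Sum>i\<le>n. monom (complex_of_real (a i)) i)"
  have "real_poly p" unfolding real_poly_def p_def by (simp add: coeff_sum coeff_monom Im_sum)
  moreover have "cmod (of_real (f t) - poly p (of_real t)) \<le> \<epsilon>" if "\<bar>t\<bar> \<le> M" for t
  proof -
    have "poly p (of_real t) = of_real (g t)"
      unfolding p_def g_eq by (simp add: poly_sum poly_monom)
    moreover have "\<bar>f t - g t\<bar> < \<epsilon>" using g(2) that by (simp add: abs_le_iff)
    ultimately show ?thesis by (simp flip: of_real_diff)
  qed
  ultimately have "poly_approx M f p \<epsilon>" unfolding poly_approx_def by blast
  then show ?thesis ..
qed

lemma norm_mult_diff_le:
  fixes a b c d :: "'a::real_normed_algebra"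
  shows "norm (a * b - c * d) \<le> norm a * norm (b - d) + norm (a - c) * norm d"
proof -
  have "a * b - c * d = a * (b - d) + (a - c) * d" by (simp add: algebra_simps)
  then have "norm (a * b - c * d) \<le> norm (a * (b - d)) + norm ((a - c) * d)"
    by (metis norm_triangle_ineq)
  also have "\<dots> \<le> norm a * norm (b - d) + norm (a - c) * norm d"
    by (intro add_mono norm_mult_ineq)
  finally show ?thesis .
qed

lemma continuous_on_Icc_common_bound:
  fixes f g :: "real \<Rightarrow> real"
  assumes "continuous_on {-M..M} f" "continuous_on {-M..M} g"
  obtains B where "0 \<le> B" "\<And>t. \<bar>t\<bar> \<le> M \<Longrightarrow> \<bar>f t\<bar> \<le> B \<and> \<bar>g t\<bar> \<le> B"
proof -
  obtain Bf where "0 \<le> Bf" "\<And>t. t \<in> {-M..M} \<Longrightarrow> norm (f t) \<le> Bf"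
    using continuous_on_compact_bound[OF compact_Icc assms(1)] by blast
  moreover obtain Bg where "\<And>t. t \<in> {-M..M} \<Longrightarrow> norm (g t) \<le> Bg"
    using continuous_on_compact_bound[OF compact_Icc assms(2)] by blast
  ultimately show ?thesis
    by (intro that[of "max Bf Bg"]) (auto simp: abs_le_iff le_max_iff_disj)
qed

lemma poly_approx_mult:
  assumes p: "poly_approx M f p \<delta>" and q: "poly_approx M g q \<delta>" and "0 \<le> \<delta>" "\<delta> \<le> 1"
    and B: "\<And>t. \<bar>t\<bar> \<le> M \<Longrightarrow> \<bar>f t\<bar> \<le> B \<and> \<bar>g t\<bar> \<le> B"
  shows "poly_approx M (\<lambda>t. f t * g t) (p * q) (\<delta> * (2 * B + 1))"
  unfolding poly_approx_def
proof (intro conjI allI impI)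
  show "real_poly (p * q)" using p q real_poly_mult unfolding poly_approx_def by blast
  fix t :: real assume t: "\<bar>t\<bar> \<le> M"
  have "cmod (of_real (f t * g t) - poly (p * q) (of_real t))
      \<le> cmod (of_real (f t) :: complex) * cmod (of_real (g t) - poly q (of_real t))
        + cmod (of_real (f t) - poly p (of_real t)) * cmod (poly q (of_real t))"
    using norm_mult_diff_le[of "of_real (f t) :: complex" "of_real (g t)"] by simp
  also have "\<dots> \<le> B * \<delta> + \<delta> * (B + 1)"
    using p q B[OF t] poly_approx_bound[OF q t] t assms(3,4) unfolding poly_approx_def
    by (intro add_mono mult_mono) auto
  finally show "cmod (of_real (f t * g t) - poly (p * q) (of_real t)) \<le> \<delta> * (2 * B + 1)"
    by (simp add: algebra_simps)
qed

section \<open>Unital C*-algebras\<close>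

text \<open>The C*-norm \<open>N\<close> need only be equivalent to the norm of the Banach space type, and \<open>chi\<close>
  is a character: this is the shape of the unitization of a C*-algebra, whose C*-norm is not the
  product norm and whose scalar part is a character vanishing on the original algebra.\<close>

locale unital_cstar =
  fixes m :: "'b::banach \<Rightarrow> 'b \<Rightarrow> 'b" (infixl "\<diamond>" 70)
    and e :: 'b
    and smul :: "complex \<Rightarrow> 'b \<Rightarrow> 'b"
    and adj :: "'b \<Rightarrow> 'b"
    and N :: "'b \<Rightarrow> real"
    and chi :: "'b \<Rightarrow> complex"
    and c1 c2 :: real
  assumes m_assoc: "(x \<diamond> y) \<diamond> z = x \<diamond> (y \<diamond> z)"
    and m_add_right: "x \<diamond> (y + z) = x \<diamond> y + x \<diamond> z"
    and m_add_left: "(x + y) \<diamond> z = x \<diamond> z + y \<diamond> z"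
    and m_e_right: "x \<diamond> e = x" and m_e_left: "e \<diamond> x = x"
    and smul_add: "smul c (x + y) = smul c x + smul c y"
    and smul_add_scalar: "smul (c + d) x = smul c x + smul d x"
    and smul_mult_scalar: "smul (c * d) x = smul c (smul d x)"
    and smul_one[simp]: "smul 1 x = x"
    and smul_of_real: "smul (of_real r) x = scaleR r x"
    and smul_m_left: "smul c x \<diamond> y = smul c (x \<diamond> y)"
    and smul_m_right: "x \<diamond> smul c y = smul c (x \<diamond> y)"
    and adj_add: "adj (x + y) = adj x + adj y"
    and adj_smul: "adj (smul c x) = smul (cnj c) (adj x)"
    and adj_m: "adj (x \<diamond> y) = adj y \<diamond> adj x"
    and adj_adj: "adj (adj x) = x"
    and N_triangle: "N (x + y) \<le> N x + N y"
    and N_smul: "N (smul c x) = cmod c * N x"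
    and N_m: "N (x \<diamond> y) \<le> N x * N y"
    and N_cstar: "N (adj x \<diamond> x) = (N x)^2"
    and N_e: "N e = 1"
    and c1_pos: "c1 > 0"
    and N_lower: "c1 * norm x \<le> N x"
    and N_upper: "N x \<le> c2 * norm x"
    and chi_add: "chi (x + y) = chi x + chi y"
    and chi_m: "chi (x \<diamond> y) = chi x * chi y"
    and chi_smul: "chi (smul c x) = c * chi x"
    and chi_e: "chi e = 1"
    and chi_bound: "cmod (chi x) \<le> N x"
begin

lemma smul_zero_scalar[simp]: "smul 0 x = 0"
  using smul_add_scalar[of 0 0 x] by simp

lemma smul_zero[simp]: "smul c 0 = 0"
  using smul_add[of c 0 0] by simp

lemma smul_minus: "smul c (- x) = - smul c x"
  using smul_add[of c x "-x"] by (simp add: eq_neg_iff_add_eq_0 add.commute)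

lemma smul_diff: "smul c (x - y) = smul c x - smul c y"
  using smul_add[of c x "-y"] by (simp add: smul_minus)

lemma smul_minus_scalar: "smul (- c) x = - smul c x"
  using smul_add_scalar[of c "-c" x] by (simp add: eq_neg_iff_add_eq_0 add.commute)

lemma smul_diff_scalar: "smul (c - d) x = smul c x - smul d x"
  using smul_add_scalar[of c "-d" x] by (simp add: smul_minus_scalar)

lemma smul_sum: "smul c (sum f A) = (\<Sum>i\<in>A. smul c (f i))"
  by (induction A rule: infinite_finite_induct) (auto simp: smul_add)

lemma m_zero_left[simp]: "0 \<diamond> x = 0"
  using m_add_left[of 0 0 x] by simp

lemma m_zero_right[simp]: "x \<diamond> 0 = 0"
  using m_add_right[of x 0 0] by simp

lemma m_minus_left: "(- x) \<diamond> y = - (x \<diamond> y)"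
  using m_add_left[of x "-x" y] by (simp add: eq_neg_iff_add_eq_0 add.commute)

lemma m_minus_right: "x \<diamond> (- y) = - (x \<diamond> y)"
  using m_add_right[of x y "-y"] by (simp add: eq_neg_iff_add_eq_0 add.commute)

lemma m_diff_left: "(x - y) \<diamond> z = x \<diamond> z - y \<diamond> z"
  using m_add_left[of x "-y" z] by (simp add: m_minus_left)

lemma m_diff_right: "z \<diamond> (x - y) = z \<diamond> x - z \<diamond> y"
  using m_add_right[of z x "-y"] by (simp add: m_minus_right)

lemma m_sum_left: "sum f A \<diamond> y = (\<Sum>i\<in>A. f i \<diamond> y)"
  by (induction A rule: infinite_finite_induct) (auto simp: m_add_left)

lemma m_sum_right: "y \<diamond> sum f A = (\<Sum>i\<in>A. y \<diamond> f i)"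
  by (induction A rule: infinite_finite_induct) (auto simp: m_add_right)

lemma m_scaleR_left: "(scaleR r x) \<diamond> y = scaleR r (x \<diamond> y)"
  using smul_m_left[of "of_real r" x y] by (simp add: smul_of_real)

lemma m_scaleR_right: "x \<diamond> (scaleR r y) = scaleR r (x \<diamond> y)"
  using smul_m_right[of x "of_real r" y] by (simp add: smul_of_real)

lemma adj_zero[simp]: "adj 0 = 0"
  using adj_add[of 0 0] by simp

lemma adj_minus: "adj (- x) = - adj x"
  using adj_add[of x "-x"] by (simp add: eq_neg_iff_add_eq_0 add.commute)

lemma adj_diff: "adj (x - y) = adj x - adj y"
  using adj_add[of x "-y"] by (simp add: adj_minus)

lemma adj_e[simp]: "adj e = e"
proof -
  have "adj e = adj e \<diamond> e" by (simp add: m_e_right)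
  also have "\<dots> = adj e \<diamond> adj (adj e)" by (simp add: adj_adj)
  also have "\<dots> = adj (adj e \<diamond> e)" by (simp add: adj_m)
  also have "\<dots> = e" by (simp add: m_e_right adj_adj)
  finally show ?thesis .
qed

lemma adj_scaleR: "adj (scaleR r x) = scaleR r (adj x)"
  using adj_smul[of "of_real r" x] by (simp add: smul_of_real)

lemma adj_sum: "adj (sum f A) = (\<Sum>i\<in>A. adj (f i))"
  by (induction A rule: infinite_finite_induct) (auto simp: adj_add)

lemma N_zero[simp]: "N 0 = 0"
  using N_smul[of 0 0] by simp

lemma N_minus: "N (- x) = N x"
  using N_smul[of "-1" x] by (simp add: smul_minus_scalar)

lemma N_nonneg: "N x \<ge> 0"
  using N_triangle[of x "-x"] by (simp add: N_minus)

lemma N_eq_0_iff: "N x = 0 \<longleftrightarrow> x = 0"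
proof
  assume "N x = 0" then have "c1 * norm x \<le> 0" using N_lower[of x] by simp
  then show "x = 0" using c1_pos by (simp add: mult_le_0_iff)
qed simp

lemma N_diff_commute: "N (x - y) = N (y - x)"
  using N_minus[of "x - y"] by simp

lemma N_diff_triangle: "N (x - z) \<le> N (x - y) + N (y - z)"
  using N_triangle[of "x - y" "y - z"] by simp

lemma N_scaleR: "N (scaleR r x) = \<bar>r\<bar> * N x"
  using N_smul[of "of_real r" x] by (simp add: smul_of_real)

lemma N_sum: "N (sum f A) \<le> (\<Sum>i\<in>A. N (f i))"
  by (induction A rule: infinite_finite_induct) (auto intro: order_trans[OF N_triangle])

lemma N_reverse_triangle: "\<bar>N x - N y\<bar> \<le> N (x - y)"
  using N_triangle[of "x - y" y] N_triangle[of "y - x" x] N_diff_commute[of x y] by auto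

lemma c2_pos: "c2 > 0"
proof -
  have "N e \<le> c2 * norm e" by (rule N_upper)
  then have "0 < c2 * norm e" using N_e by simp
  then show ?thesis by (simp add: zero_less_mult_iff)
qed

lemma N_adj: "N (adj x) = N x"
proof -
  have le: "N y \<le> N (adj y)" for y
  proof (cases "N y = 0")
    case False
    have "(N y)^2 = N (adj y \<diamond> y)" by (simp add: N_cstar)
    also have "\<dots> \<le> N (adj y) * N y" by (rule N_m)
    finally have "N y * N y \<le> N (adj y) * N y" by (simp add: power2_eq_square)
    then show ?thesis using False N_nonneg[of y] by auto
  qed (simp add: N_nonneg)
  show ?thesis using le[of x] le[of "adj x"] by (simp add: adj_adj)
qed

lemma norm_le_N: "norm x \<le> N x / c1"
  using N_lower[of x] c1_pos by (simp add: field_simps)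

lemma tendsto_N_iff: "(f \<longlongrightarrow> l) F \<longleftrightarrow> ((\<lambda>n. N (f n - l)) \<longlongrightarrow> 0) F"
proof
  assume "(f \<longlongrightarrow> l) F"
  then have "((\<lambda>n. f n - l) \<longlongrightarrow> 0) F" by (rule LIM_zero)
  then have "((\<lambda>n. norm (f n - l)) \<longlongrightarrow> 0) F" by (rule tendsto_norm_zero)
  then have "((\<lambda>n. c2 * norm (f n - l)) \<longlongrightarrow> 0) F"
    using tendsto_mult_right_zero by blast
  then show "((\<lambda>n. N (f n - l)) \<longlongrightarrow> 0) F"
    by (rule tendsto_sandwich[rotated 2, OF tendsto_const]) (auto simp: N_nonneg N_upper)
next
  assume "((\<lambda>n. N (f n - l)) \<longlongrightarrow> 0) F"
  then have "((\<lambda>n. N (f n - l) / c1) \<longlongrightarrow> 0) F"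
    using tendsto_divide_zero by blast
  then have "((\<lambda>n. norm (f n - l)) \<longlongrightarrow> 0) F"
    by (rule tendsto_sandwich[rotated 2, OF tendsto_const]) (auto simp: norm_le_N)
  then show "(f \<longlongrightarrow> l) F"
    using LIM_zero_cancel tendsto_norm_zero_iff by blast
qed

lemma tendsto_N: "(f \<longlongrightarrow> l) F \<Longrightarrow> ((\<lambda>n. N (f n)) \<longlongrightarrow> N l) F"
proof -
  assume "(f \<longlongrightarrow> l) F"
  then have "((\<lambda>n. N (f n - l)) \<longlongrightarrow> 0) F" by (simp add: tendsto_N_iff)
  then have "((\<lambda>n. \<bar>N (f n) - N l\<bar>) \<longlongrightarrow> 0) F"
    by (rule tendsto_sandwich[rotated 2, OF tendsto_const]) (auto simp: N_reverse_triangle)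
  then have "((\<lambda>n. N (f n) - N l) \<longlongrightarrow> 0) F" by (simp only: tendsto_rabs_zero_iff)
  then show ?thesis by (rule LIM_zero_cancel)
qed

lemma bounded_linear_m_right: "bounded_linear (\<lambda>y. a \<diamond> y)"
proof (rule bounded_linear_intro[where K = "N a * c2 / c1"])
  show "a \<diamond> (x + y) = a \<diamond> x + a \<diamond> y" for x y by (rule m_add_right)
  show "a \<diamond> (scaleR r x) = scaleR r (a \<diamond> x)" for r x by (rule m_scaleR_right)
  show "norm (a \<diamond> x) \<le> norm x * (N a * c2 / c1)" for x
  proof -
    have "norm (a \<diamond> x) \<le> N (a \<diamond> x) / c1" by (rule norm_le_N)
    also have "\<dots> \<le> N a * N x / c1" using N_m c1_pos by (simp add: divide_right_mono)
    also have "\<dots> \<le> N a * (c2 * norm x) / c1"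
      using N_upper c1_pos N_nonneg[of a] by (simp add: divide_right_mono mult_left_mono)
    finally show ?thesis by (simp add: algebra_simps)
  qed
qed

lemma bounded_linear_m_left: "bounded_linear (\<lambda>y. y \<diamond> a)"
proof (rule bounded_linear_intro[where K = "N a * c2 / c1"])
  show "(x + y) \<diamond> a = x \<diamond> a + y \<diamond> a" for x y by (rule m_add_left)
  show "(scaleR r x) \<diamond> a = scaleR r (x \<diamond> a)" for r x by (rule m_scaleR_left)
  show "norm (x \<diamond> a) \<le> norm x * (N a * c2 / c1)" for x
  proof -
    have "norm (x \<diamond> a) \<le> N (x \<diamond> a) / c1" by (rule norm_le_N)
    also have "\<dots> \<le> N x * N a / c1" using N_m c1_pos by (simp add: divide_right_mono)
    also have "\<dots> \<le> (c2 * norm x) * N a / c1"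
      using N_upper c1_pos N_nonneg[of a] by (simp add: divide_right_mono mult_right_mono)
    finally show ?thesis by (simp add: algebra_simps)
  qed
qed

primrec mpow :: "'b \<Rightarrow> nat \<Rightarrow> 'b" where
  "mpow x 0 = e"
| "mpow x (Suc n) = x \<diamond> mpow x n"

lemma mpow_add: "mpow x (i + j) = mpow x i \<diamond> mpow x j"
  by (induction i) (auto simp: m_e_left m_assoc)

lemma mpow_Suc_right: "mpow x (Suc n) = mpow x n \<diamond> x"
  using mpow_add[of x n 1] by (simp add: m_e_right)

lemma N_mpow: "N (mpow x n) \<le> (N x)^n"
proof (induction n)
  case (Suc n)
  have "N (x \<diamond> mpow x n) \<le> N x * N (mpow x n)" by (rule N_m)
  also have "\<dots> \<le> N x * (N x)^n" using Suc N_nonneg[of x] by (simp add: mult_left_mono)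
  finally show ?case by simp
qed (simp add: N_e)

lemma mpow_commute: "a \<diamond> x = x \<diamond> a \<Longrightarrow> a \<diamond> mpow x n = mpow x n \<diamond> a"
proof (induction n)
  case 0 then show ?case by (simp add: m_e_right m_e_left)
next
  case (Suc n)
  have "a \<diamond> (x \<diamond> mpow x n) = (x \<diamond> a) \<diamond> mpow x n" using Suc by (simp add: m_assoc[symmetric])
  also have "\<dots> = x \<diamond> (mpow x n \<diamond> a)" using Suc by (simp add: m_assoc)
  finally show ?case by (simp add: m_assoc)
qed

lemma adj_mpow: "adj (mpow x n) = mpow (adj x) n"
proof (induction n)
  case (Suc n)
  have "adj (mpow x (Suc n)) = adj (mpow x n) \<diamond> adj x" by (simp add: adj_m)
  also have "\<dots> = mpow (adj x) n \<diamond> adj x" using Suc by simp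
  also have "\<dots> = mpow (adj x) (Suc n)" by (rule mpow_Suc_right[symmetric])
  finally show ?case .
qed simp

lemma mpow_smul: "mpow (smul c x) n = smul (c^n) (mpow x n)"
  by (induction n) (auto simp: smul_m_left smul_m_right smul_mult_scalar[symmetric] mult.commute)

definition is_inv :: "'b \<Rightarrow> 'b \<Rightarrow> bool" where
  "is_inv x y \<longleftrightarrow> x \<diamond> y = e \<and> y \<diamond> x = e"

definition has_inv :: "'b \<Rightarrow> bool" where
  "has_inv x \<longleftrightarrow> (\<exists>y. is_inv x y)"

definition spectrum :: "'b \<Rightarrow> complex set" where
  "spectrum x = {l. \<not> has_inv (smul l e - x)}"

lemma is_inv_unique: "is_inv x y \<Longrightarrow> is_inv x z \<Longrightarrow> y = z"
  unfolding is_inv_def by (metis m_assoc m_e_right m_e_left)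

lemma is_inv_sym: "is_inv x y \<Longrightarrow> is_inv y x"
  unfolding is_inv_def by auto

lemma is_inv_e: "is_inv e e" unfolding is_inv_def by (simp add: m_e_right)

lemma is_inv_m: "is_inv x x' \<Longrightarrow> is_inv y y' \<Longrightarrow> is_inv (x \<diamond> y) (y' \<diamond> x')"
  unfolding is_inv_def by (metis m_assoc m_e_right)

lemma has_inv_m: "has_inv x \<Longrightarrow> has_inv y \<Longrightarrow> has_inv (x \<diamond> y)"
  unfolding has_inv_def using is_inv_m by blast

lemma is_inv_smul: "is_inv x y \<Longrightarrow> c \<noteq> 0 \<Longrightarrow> is_inv (smul c x) (smul (inverse c) y)"
  unfolding is_inv_def by (simp add: smul_m_left smul_m_right smul_mult_scalar[symmetric])

lemma has_inv_smul: "has_inv x \<Longrightarrow> c \<noteq> 0 \<Longrightarrow> has_inv (smul c x)"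
  unfolding has_inv_def using is_inv_smul by blast

lemma has_inv_smul_iff: "c \<noteq> 0 \<Longrightarrow> has_inv (smul c x) \<longleftrightarrow> has_inv x"
  using has_inv_smul[of "smul c x" "inverse c"] has_inv_smul[of x c] by (auto simp: smul_mult_scalar[symmetric])

lemma summable_mpow:
  assumes "N x < 1"
  shows "summable (mpow x)"
proof (rule summable_comparison_test)
  show "\<exists>n0. \<forall>n\<ge>n0. norm (mpow x n) \<le> (N x)^n / c1"
  proof (intro exI allI impI)
    fix n :: nat
    have "norm (mpow x n) \<le> N (mpow x n) / c1" by (rule norm_le_N)
    also have "\<dots> \<le> N x ^ n / c1" using N_mpow c1_pos by (simp add: divide_right_mono)
    finally show "norm (mpow x n) \<le> N x ^ n / c1" .
  qed
  show "summable (\<lambda>n. (N x)^n / c1)"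
    using assms N_nonneg[of x] by (auto intro!: summable_divide summable_geometric)
qed

lemma N_suminf:
  assumes "summable f" "summable (\<lambda>n. N (f n))"
  shows "N (suminf f) \<le> (\<Sum>n. N (f n))"
proof -
  have "(\<lambda>k. N (\<Sum>n<k. f n)) \<longlonglongrightarrow> N (suminf f)"
    using tendsto_N[OF summable_LIMSEQ[OF assms(1)]] by simp
  moreover have "(\<lambda>k. \<Sum>n<k. N (f n)) \<longlonglongrightarrow> (\<Sum>n. N (f n))"
    using summable_LIMSEQ[OF assms(2)] by simp
  ultimately show ?thesis
    by (rule LIMSEQ_le) (auto intro: N_sum)
qed

lemma is_inv_neumann:
  assumes "N x < 1"
  shows "is_inv (e - x) (suminf (mpow x))"
proof -
  have sm: "summable (mpow x)" using summable_mpow[OF assms] .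
  have tel: "(\<lambda>n. mpow x n - mpow x (Suc n)) sums e"
    using sums_minus[OF telescope_sums[OF summable_LIMSEQ_zero[OF sm]]] by simp
  have "(\<lambda>n. (e - x) \<diamond> mpow x n) sums ((e - x) \<diamond> suminf (mpow x))"
    using bounded_linear.sums[OF bounded_linear_m_right summable_sums[OF sm]] .
  moreover have "(\<lambda>n. (e - x) \<diamond> mpow x n) = (\<lambda>n. mpow x n - mpow x (Suc n))"
    by (auto simp: m_diff_left m_e_left)
  ultimately have left: "(e - x) \<diamond> suminf (mpow x) = e" using tel sums_unique2 by fastforce
  have "(\<lambda>n. mpow x n \<diamond> (e - x)) sums (suminf (mpow x) \<diamond> (e - x))"
    using bounded_linear.sums[OF bounded_linear_m_left summable_sums[OF sm]] .
  moreover have "(\<lambda>n. mpow x n \<diamond> (e - x)) = (\<lambda>n. mpow x n - mpow x (Suc n))"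
    using mpow_commute[of x x] by (auto simp: m_diff_right m_e_right)
  ultimately have right: "suminf (mpow x) \<diamond> (e - x) = e" using tel sums_unique2 by fastforce
  show ?thesis using left right unfolding is_inv_def by simp
qed

lemma N_neumann_minus_e:
  assumes "N x < 1"
  shows "N (suminf (mpow x) - e) \<le> N x / (1 - N x)"
proof -
  have sm: "summable (mpow x)" using summable_mpow[OF assms] .
  have geom: "summable (\<lambda>n. N x ^ Suc n)"
    using assms N_nonneg[of x] by (simp add: summable_geometric)
  have sm_N: "summable (\<lambda>n. N (mpow x (Suc n)))"
  proof (rule summable_comparison_test[OF _ geom], intro exI[of _ 0] allI impI)
    show "norm (N (mpow x (Suc n))) \<le> N x ^ Suc n" for n
      using N_mpow[of x "Suc n"] by (simp add: N_nonneg)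
  qed
  have "suminf (mpow x) - e = (\<Sum>n. mpow x (Suc n))"
    using suminf_split_head[OF sm] by simp
  also have "N \<dots> \<le> (\<Sum>n. N (mpow x (Suc n)))"
    using summable_ignore_initial_segment[OF sm, of 1] sm_N by (intro N_suminf) simp_all
  also have "\<dots> \<le> (\<Sum>n. N x ^ Suc n)"
    by (rule suminf_le[OF _ sm_N geom], rule N_mpow)
  also have "\<dots> = N x * (\<Sum>n. N x ^ n)"
    using assms N_nonneg[of x] by (simp add: suminf_mult summable_geometric)
  also have "\<dots> = N x / (1 - N x)"
    using assms N_nonneg[of x] by (simp add: suminf_geometric divide_simps)
  finally show ?thesis .
qed

lemma has_inv_e_minus: "N x < 1 \<Longrightarrow> has_inv (e - x)"
  using is_inv_neumann unfolding has_inv_def by blast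

lemma N_inv_e_minus:
  assumes "N x < 1" "is_inv (e - x) y"
  shows "N (y - e) \<le> N x / (1 - N x)"
  using is_inv_neumann[OF assms(1)] N_neumann_minus_e[OF assms(1)] is_inv_unique[OF assms(2)]
  by metis

lemma spectrum_bound: "l \<in> spectrum x \<Longrightarrow> cmod l \<le> N x"
proof (rule ccontr)
  assume l: "l \<in> spectrum x" and "\<not> cmod l \<le> N x"
  then have lt: "N x < cmod l" by simp
  then have l0: "l \<noteq> 0" using N_nonneg[of x] by auto
  have "N (smul (inverse l) x) = N x / cmod l"
    by (simp add: N_smul norm_inverse divide_inverse mult.commute)
  also have "\<dots> < 1" using lt l0 by (auto simp: divide_less_eq)
  finally have "has_inv (e - smul (inverse l) x)" by (rule has_inv_e_minus)
  then have "has_inv (smul l (e - smul (inverse l) x))" using l0 by (simp add: has_inv_smul)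
  moreover have "smul l (e - smul (inverse l) x) = smul l e - x"
    using l0 by (simp add: smul_diff smul_mult_scalar[symmetric])
  ultimately show False using l unfolding spectrum_def by simp
qed

definition inv_elt :: "'b \<Rightarrow> 'b" where
  "inv_elt y = (SOME z. is_inv y z)"

lemma is_inv_inv_elt: "has_inv y \<Longrightarrow> is_inv y (inv_elt y)"
  unfolding has_inv_def inv_elt_def by (rule someI_ex)

lemma inv_elt_eq: "is_inv y z \<Longrightarrow> inv_elt y = z"
  using is_inv_inv_elt is_inv_unique has_inv_def by blast

lemma e_neq_0: "e \<noteq> 0"
  using N_e by auto

lemma not_has_inv_0: "\<not> has_inv 0"
  unfolding has_inv_def is_inv_def using e_neq_0 by auto

lemma has_inv_e: "has_inv e"
  using is_inv_e has_inv_def by blast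

lemma has_inv_minus_iff: "has_inv (- y) \<longleftrightarrow> has_inv y"
  using has_inv_smul_iff[of "-1" y] by (simp add: smul_minus_scalar)

lemma inv_elt_perturb:
  assumes "has_inv x" and small: "2 * N (inv_elt x) * N d \<le> 1"
  shows "has_inv (x + d)"
    and "N (inv_elt (x + d) - inv_elt x) \<le> 2 * (N (inv_elt x))^2 * N d"
proof -
  define y where "y = inv_elt x"
  have y: "is_inv x y" unfolding y_def by (rule is_inv_inv_elt[OF assms(1)])
  define w where "w = - (y \<diamond> d)"
  have Nw: "N w \<le> N y * N d" unfolding w_def by (simp add: N_minus N_m)
  have Nw2: "N w \<le> 1/2" using Nw small unfolding y_def by linarith
  define s where "s = suminf (mpow w)"
  have s: "is_inv (e - w) s" unfolding s_def using Nw2 by (intro is_inv_neumann) simp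
  have "N (s - e) \<le> N w / (1 - N w)" using N_inv_e_minus[OF _ s] Nw2 by simp
  also have "\<dots> \<le> 2 * N w" using Nw2 N_nonneg[of w] by (rule frac_le_twice[rotated])
  finally have Ns: "N (s - e) \<le> 2 * (N y * N d)" using Nw by linarith
  have "x + d = x \<diamond> (e - w)"
    using y unfolding w_def is_inv_def by (simp add: m_add_right m_e_right m_e_left m_assoc[symmetric])
  then have inv: "is_inv (x + d) (s \<diamond> y)" using is_inv_m[OF y s] by simp
  then show "has_inv (x + d)" unfolding has_inv_def by blast
  have "N (s \<diamond> y - y) = N ((s - e) \<diamond> y)" by (simp add: m_diff_left m_e_left)
  also have "\<dots> \<le> N (s - e) * N y" by (rule N_m)
  also have "\<dots> \<le> 2 * (N y * N d) * N y" using Ns N_nonneg by (rule mult_right_mono)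
  finally show "N (inv_elt (x + d) - inv_elt x) \<le> 2 * (N (inv_elt x))^2 * N d"
    unfolding inv_elt_eq[OF inv] y_def[symmetric] by (simp add: power2_eq_square algebra_simps)
qed

section \<open>Rickart's spectral radius estimate\<close>

lemma resolvent_diff:
  assumes "is_inv (e - smul a x) u" "is_inv (e - smul b x) v"
  shows "u - v = smul (a - b) (u \<diamond> x \<diamond> v)"
proof -
  have "u \<diamond> ((e - smul b x) - (e - smul a x)) \<diamond> v =
        u \<diamond> ((e - smul b x) \<diamond> v) - (u \<diamond> (e - smul a x)) \<diamond> v"
    by (simp add: m_diff_left m_diff_right m_assoc)
  also have "\<dots> = u - v" using assms unfolding is_inv_def by (simp add: m_e_right m_e_left)
  finally have "u - v = u \<diamond> ((e - smul b x) - (e - smul a x)) \<diamond> v" by simp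
  also have "(e - smul b x) - (e - smul a x) = smul (a - b) x" by (simp add: smul_diff_scalar)
  finally show ?thesis by (simp add: smul_m_left smul_m_right)
qed

lemma continuous_on_resolvent:
  assumes "\<And>\<nu>. \<nu> \<in> S \<Longrightarrow> has_inv (e - smul \<nu> x)"
  shows "continuous_on S (\<lambda>\<nu>. inv_elt (e - smul \<nu> x))"
  unfolding continuous_on_def
proof
  fix \<nu>0 assume \<nu>0: "\<nu>0 \<in> S"
  define y0 where "y0 = inv_elt (e - smul \<nu>0 x)"
  define d where "d \<nu> = smul (\<nu>0 - \<nu>) x" for \<nu>
  have shift: "(e - smul \<nu>0 x) + d \<nu> = e - smul \<nu> x" for \<nu>
    unfolding d_def by (simp add: smul_diff_scalar)
  have lim: "((\<lambda>\<nu>. 2 * N y0 * N (d \<nu>)) \<longlongrightarrow> 0) (at \<nu>0 within S)"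
  proof -
    have "((\<lambda>\<nu>. 2 * N y0 * (cmod (\<nu>0 - \<nu>) * N x)) \<longlongrightarrow> 2 * N y0 * (cmod (\<nu>0 - \<nu>0) * N x))
           (at \<nu>0 within S)"
      by (intro tendsto_intros)
    then show ?thesis by (simp add: d_def N_smul)
  qed
  have "\<forall>\<^sub>F \<nu> in at \<nu>0 within S. 2 * N y0 * N (d \<nu>) \<le> 1"
    using order_tendstoD(2)[OF lim, of 1] by (rule eventually_mono) simp_all
  then have "\<forall>\<^sub>F \<nu> in at \<nu>0 within S.
               norm (N (inv_elt (e - smul \<nu> x) - y0)) \<le> N y0 * (2 * N y0 * N (d \<nu>))"
  proof (rule eventually_mono)
    fix \<nu> assume "2 * N y0 * N (d \<nu>) \<le> 1"
    then have "N (inv_elt (e - smul \<nu> x) - y0) \<le> 2 * (N y0)^2 * N (d \<nu>)"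
      using inv_elt_perturb(2)[OF assms[OF \<nu>0], of "d \<nu>", folded y0_def] by (simp only: shift)
    then show "norm (N (inv_elt (e - smul \<nu> x) - y0)) \<le> N y0 * (2 * N y0 * N (d \<nu>))"
      by (simp add: N_nonneg power2_eq_square mult.assoc mult.left_commute)
  qed
  moreover have "((\<lambda>\<nu>. N y0 * (2 * N y0 * N (d \<nu>))) \<longlongrightarrow> 0) (at \<nu>0 within S)"
    using tendsto_mult_right_zero[OF lim] .
  ultimately have "((\<lambda>\<nu>. N (inv_elt (e - smul \<nu> x) - y0)) \<longlongrightarrow> 0) (at \<nu>0 within S)"
    by (rule Lim_null_comparison)
  then show "((\<lambda>\<nu>. inv_elt (e - smul \<nu> x)) \<longlongrightarrow> inv_elt (e - smul \<nu>0 x)) (at \<nu>0 within S)"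
    by (simp add: tendsto_N_iff y0_def)
qed

lemma resolvent_lipschitz:
  assumes H: "\<And>\<nu>. cmod \<nu> \<le> 1 \<Longrightarrow> has_inv (e - smul \<nu> x)"
  obtains L where "0 \<le> L" and "\<And>\<nu> \<nu>'. cmod \<nu> \<le> 1 \<Longrightarrow> cmod \<nu>' \<le> 1 \<Longrightarrow>
      N (inv_elt (e - smul \<nu> x) - inv_elt (e - smul \<nu>' x)) \<le> L * cmod (\<nu> - \<nu>')"
proof -
  obtain R where R: "\<And>\<nu>. cmod \<nu> \<le> 1 \<Longrightarrow> norm (inv_elt (e - smul \<nu> x)) \<le> R"
    using continuous_on_compact_bound[OF compact_cball[of 0 1] continuous_on_resolvent[of _ x]] H
    by (metis mem_cball_0)
  define K where "K = c2 * R"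
  have K: "N (inv_elt (e - smul \<nu> x)) \<le> K" if "cmod \<nu> \<le> 1" for \<nu>
    unfolding K_def using N_upper R[OF that] c2_pos by (meson mult_left_mono less_imp_le order_trans)
  have K0: "0 \<le> K" using K[of 0] N_nonneg[of "inv_elt (e - smul 0 x)"] by simp
  show ?thesis
  proof (rule that[of "K * N x * K"])
    show "0 \<le> K * N x * K" using K0 N_nonneg by simp
    fix \<nu> \<nu>' :: complex assume \<nu>: "cmod \<nu> \<le> 1" and \<nu>': "cmod \<nu>' \<le> 1"
    define u where "u = inv_elt (e - smul \<nu> x)"
    define v where "v = inv_elt (e - smul \<nu>' x)"
    have "N (u - v) = cmod (\<nu> - \<nu>') * N (u \<diamond> x \<diamond> v)"
      using resolvent_diff[OF is_inv_inv_elt[OF H[OF \<nu>]] is_inv_inv_elt[OF H[OF \<nu>']]]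
      unfolding u_def v_def by (simp add: N_smul)
    also have "\<dots> \<le> cmod (\<nu> - \<nu>') * (N u * N x * N v)"
    proof (rule mult_left_mono)
      have "N (u \<diamond> x \<diamond> v) \<le> N (u \<diamond> x) * N v" by (rule N_m)
      also have "\<dots> \<le> N u * N x * N v" by (intro mult_right_mono N_m N_nonneg)
      finally show "N (u \<diamond> x \<diamond> v) \<le> N u * N x * N v" .
    qed simp
    also have "\<dots> \<le> cmod (\<nu> - \<nu>') * (K * N x * K)"
      using K[OF \<nu>] K[OF \<nu>'] K0 unfolding u_def v_def
      by (intro mult_left_mono mult_mono N_nonneg mult_nonneg_nonneg) auto
    finally show "N (u - v) \<le> K * N x * K * cmod (\<nu> - \<nu>')" by (simp add: mult.commute)
  qed
qed

lemma is_inv_e_minus_square: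
  assumes a: "is_inv (e - y) a" and b: "is_inv (e + y) b"
  shows "is_inv (e - y \<diamond> y) (scaleR (1/2) (a + b))"
proof -
  have prod1: "(e - y) \<diamond> (e + y) = e - y \<diamond> y"
    by (simp add: m_add_right m_diff_left m_e_right m_e_left)
  have prod2: "(e + y) \<diamond> (e - y) = e - y \<diamond> y"
    by (simp add: m_add_left m_diff_right m_e_right m_e_left)
  have "a \<diamond> (e - y \<diamond> y) = e + y"
    using a unfolding is_inv_def prod1[symmetric] by (simp add: m_assoc[symmetric] m_e_left)
  moreover have "b \<diamond> (e - y \<diamond> y) = e - y"
    using b unfolding is_inv_def prod2[symmetric] by (simp add: m_assoc[symmetric] m_e_left)
  moreover have "(e - y \<diamond> y) \<diamond> a = e + y"
    using a unfolding is_inv_def prod2[symmetric] by (simp add: m_assoc m_e_right)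
  moreover have "(e - y \<diamond> y) \<diamond> b = e - y"
    using b unfolding is_inv_def prod1[symmetric] by (simp add: m_assoc m_e_right)
  ultimately show ?thesis
    unfolding is_inv_def by (simp add: m_add_left m_add_right m_scaleR_left m_scaleR_right scaleR_2)
qed

lemma mpow_2_Suc: "mpow y (2 ^ Suc k) = mpow y (2 ^ k) \<diamond> mpow y (2 ^ k)"
  by (simp add: mpow_add[symmetric] mult_2)

lemma mpow_smul_rotate: "mpow (smul (cis (pi / 2^k) * \<nu>) x) (2^k) = - mpow (smul \<nu> x) (2^k)"
proof -
  have "cis (pi / 2^k) ^ 2^k = -1" by (simp add: Complex.DeMoivre)
  then show ?thesis by (simp add: mpow_smul power_mult_distrib smul_minus_scalar)
qed

text \<open>Rickart's doubling step: \<open>(e - y\<^sup>2)\<inverse> = ((e - y)\<inverse> + (e + y)\<inverse>) / 2\<close>, and \<open>e + y\<close> is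
  \<open>e - y\<close> at a rotated point of the unit disc, so the resolvents of all the powers
  \<open>(\<nu> x)\<^bsup>2\<^sup>k\<^esup>\<close> share the Lipschitz constant of the resolvent of \<open>x\<close>.\<close>

lemma rickart_step:
  assumes H: "\<And>\<nu>. cmod \<nu> \<le> 1 \<Longrightarrow> has_inv (e - smul \<nu> x)"
    and L: "\<And>\<nu> \<nu>'. cmod \<nu> \<le> 1 \<Longrightarrow> cmod \<nu>' \<le> 1 \<Longrightarrow>
              N (inv_elt (e - smul \<nu> x) - inv_elt (e - smul \<nu>' x)) \<le> L * cmod (\<nu> - \<nu>')"
  shows "(\<forall>\<nu>. cmod \<nu> \<le> 1 \<longrightarrow> has_inv (e - mpow (smul \<nu> x) (2^k))) \<and>
         (\<forall>\<nu> \<nu>'. cmod \<nu> \<le> 1 \<longrightarrow> cmod \<nu>' \<le> 1 \<longrightarrow>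
            N (inv_elt (e - mpow (smul \<nu> x) (2^k)) - inv_elt (e - mpow (smul \<nu>' x) (2^k)))
              \<le> L * cmod (\<nu> - \<nu>'))"
proof (induction k)
  case 0 then show ?case using H L by (simp add: m_e_right)
next
  case (Suc k)
  define z where "z = cis (pi / 2^k)"
  define R where "R \<nu> = inv_elt (e - mpow (smul \<nu> x) (2^k))" for \<nu>
  have z: "cmod (z * \<nu>) = cmod \<nu>" for \<nu> by (simp add: z_def norm_mult)
  have half: "is_inv (e - mpow (smul \<nu> x) (2 ^ Suc k)) (scaleR (1/2) (R \<nu> + R (z * \<nu>)))"
    if "cmod \<nu> \<le> 1" for \<nu>
  proof -
    have "is_inv (e - mpow (smul (z * \<nu>) x) (2^k)) (R (z * \<nu>))"
      using Suc.IH that z is_inv_inv_elt unfolding R_def by simp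
    then have "is_inv (e + mpow (smul \<nu> x) (2^k)) (R (z * \<nu>))"
      unfolding z_def mpow_smul_rotate by simp
    moreover have "is_inv (e - mpow (smul \<nu> x) (2^k)) (R \<nu>)"
      using Suc.IH that is_inv_inv_elt unfolding R_def by simp
    ultimately show ?thesis unfolding mpow_2_Suc by (rule is_inv_e_minus_square[rotated])
  qed
  show ?case
  proof (intro conjI allI impI)
    show "has_inv (e - mpow (smul \<nu> x) (2 ^ Suc k))" if "cmod \<nu> \<le> 1" for \<nu>
      using half[OF that] has_inv_def by blast
  next
    fix \<nu> \<nu>' :: complex assume \<nu>: "cmod \<nu> \<le> 1" and \<nu>': "cmod \<nu>' \<le> 1"
    have "N (inv_elt (e - mpow (smul \<nu> x) (2 ^ Suc k)) - inv_elt (e - mpow (smul \<nu>' x) (2 ^ Suc k)))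
        = N (scaleR (1/2) ((R \<nu> - R \<nu>') + (R (z * \<nu>) - R (z * \<nu>'))))"
      using inv_elt_eq[OF half[OF \<nu>]] inv_elt_eq[OF half[OF \<nu>']] by (simp add: algebra_simps)
    also have "\<dots> \<le> (1/2) * (N (R \<nu> - R \<nu>') + N (R (z * \<nu>) - R (z * \<nu>')))"
      using N_triangle by (simp add: N_scaleR)
    also have "\<dots> \<le> (1/2) * (L * cmod (\<nu> - \<nu>') + L * cmod (z * \<nu> - z * \<nu>'))"
      using Suc.IH \<nu> \<nu>' z unfolding R_def by (intro mult_left_mono add_mono) auto
    also have "cmod (z * \<nu> - z * \<nu>') = cmod (\<nu> - \<nu>')"
      using z[of "\<nu> - \<nu>'"] by (simp add: right_diff_distrib)
    finally show "N (inv_elt (e - mpow (smul \<nu> x) (2 ^ Suc k))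
        - inv_elt (e - mpow (smul \<nu>' x) (2 ^ Suc k))) \<le> L * cmod (\<nu> - \<nu>')"
      by simp
  qed
qed

lemma N_le_1_if_resolvents_close:
  assumes "N y < 1/5" "has_inv (e - y')" "N (inv_elt (e - y') - inv_elt (e - y)) \<le> 1/4"
  shows "N y' \<le> 1"
proof -
  have "N (inv_elt (e - y) - e) \<le> N y / (1 - N y)"
    using assms(1) is_inv_inv_elt[OF has_inv_e_minus] by (intro N_inv_e_minus) auto
  also have "\<dots> \<le> (1/5) / (1 - 1/5)"
    using assms(1) N_nonneg[of y] by (intro frac_le) auto
  finally have "N (inv_elt (e - y) - e) \<le> 1/4" by simp
  define E where "E = e - inv_elt (e - y')"
  have "N E \<le> N (inv_elt (e - y') - inv_elt (e - y)) + N (inv_elt (e - y) - e)"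
    unfolding E_def N_diff_commute[of e] by (rule N_diff_triangle)
  then have NE: "N E \<le> 1/2" using assms(3) \<open>N (inv_elt (e - y) - e) \<le> 1/4\<close> by linarith
  have "is_inv (e - E) (e - y')"
    unfolding E_def using is_inv_sym[OF is_inv_inv_elt[OF assms(2)]] by simp
  then have "N ((e - y') - e) \<le> N E / (1 - N E)" using NE by (intro N_inv_e_minus) auto
  also have "\<dots> \<le> (1/2) / (1 - 1/2)" using NE N_nonneg[of E] by (intro frac_le) auto
  finally show ?thesis by (simp add: N_minus)
qed

lemma rickart_propagate:
  assumes H: "\<And>\<nu>. cmod \<nu> \<le> 1 \<Longrightarrow> has_inv (e - smul \<nu> x)"
    and L: "\<And>\<nu> \<nu>'. cmod \<nu> \<le> 1 \<Longrightarrow> cmod \<nu>' \<le> 1 \<Longrightarrow>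
              N (inv_elt (e - smul \<nu> x) - inv_elt (e - smul \<nu>' x)) \<le> L * cmod (\<nu> - \<nu>')"
    and \<rho>: "0 \<le> \<rho>" "\<rho> \<le> 1" "0 \<le> \<rho>'" "\<rho>' \<le> 1" "L * \<bar>\<rho> - \<rho>'\<bar> \<le> 1/4"
    and lim: "(\<lambda>k. \<rho>^(2^k) * N (mpow x (2^k))) \<longlonglongrightarrow> 0"
  shows "\<exists>k0. \<forall>k\<ge>k0. \<rho>'^(2^k) * N (mpow x (2^k)) \<le> 1"
proof -
  note step = rickart_step[OF H L]
  have N_Y: "N (mpow (smul (of_real r) x) (2^k)) = r^(2^k) * N (mpow x (2^k))" if "0 \<le> r" for r k
    using that by (simp add: mpow_smul N_smul norm_power)
  obtain k0 where k0: "\<And>k. k \<ge> k0 \<Longrightarrow> \<rho>^(2^k) * N (mpow x (2^k)) < 1/5"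
    using order_tendstoD(2)[OF lim, of "1/5"] by (auto simp: eventually_sequentially)
  have "N (mpow (smul (of_real \<rho>') x) (2^k)) \<le> 1" if "k \<ge> k0" for k
  proof (rule N_le_1_if_resolvents_close)
    show "N (mpow (smul (of_real \<rho>) x) (2^k)) < 1/5" using k0[OF that] N_Y \<rho> by simp
    show "has_inv (e - mpow (smul (of_real \<rho>') x) (2^k))" using step \<rho> by simp
    have "N (inv_elt (e - mpow (smul (of_real \<rho>') x) (2^k)) - inv_elt (e - mpow (smul (of_real \<rho>) x) (2^k)))
        \<le> L * cmod (of_real \<rho>' - of_real \<rho>)"
      using step \<rho> by simp
    then show "N (inv_elt (e - mpow (smul (of_real \<rho>') x) (2^k))
        - inv_elt (e - mpow (smul (of_real \<rho>) x) (2^k))) \<le> 1/4"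
      using \<rho>(5) by (simp add: abs_minus_commute flip: of_real_diff)
  qed
  then show ?thesis using N_Y \<rho> by auto
qed

text \<open>Writing \<open>a\<^sub>k = \<parallel>x\<^bsup>2\<^sup>k\<^esup>\<parallel>\<close>, the property
  ``eventually \<open>\<rho>\<^bsup>2\<^sup>k\<^esup> a\<^sub>k \<le> 1\<close>'' spreads from \<open>\<rho> = 0\<close> to \<open>\<rho> = 1\<close> in steps of fixed size.\<close>

lemma rickart:
  assumes H: "\<And>\<nu>. cmod \<nu> \<le> 1 \<Longrightarrow> has_inv (e - smul \<nu> x)"
  shows "\<exists>k0. \<forall>k\<ge>k0. N (mpow x (2^k)) \<le> 1"
proof -
  obtain L where L0: "0 \<le> L" and L: "\<And>\<nu> \<nu>'. cmod \<nu> \<le> 1 \<Longrightarrow> cmod \<nu>' \<le> 1 \<Longrightarrow>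
      N (inv_elt (e - smul \<nu> x) - inv_elt (e - smul \<nu>' x)) \<le> L * cmod (\<nu> - \<nu>')"
    using resolvent_lipschitz[OF H] by blast
  define \<delta> where "\<delta> = 1 / (4 * (L + 1))"
  have \<delta>: "0 < \<delta>" "L * \<delta> \<le> 1/4" unfolding \<delta>_def using L0 by (auto simp: field_simps)
  define Bd where "Bd \<rho> \<longleftrightarrow> (\<exists>k0. \<forall>k\<ge>k0. \<rho>^(2^k) * N (mpow x (2^k)) \<le> 1)" for \<rho> :: real
  have Bd_step: "Bd \<rho>'" if "Bd \<rho>" "0 \<le> \<rho>" "\<rho> \<le> \<rho>'" "\<rho>' \<le> 1" "\<rho>' \<le> \<rho> + \<delta>/2" for \<rho> \<rho>'
  proof -
    define \<rho>1 where "\<rho>1 = max 0 (\<rho> - \<delta>/2)"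
    have "(\<lambda>k. \<rho>1^(2^k) * N (mpow x (2^k))) \<longlonglongrightarrow> 0"
    proof (cases "\<rho>1 = 0")
      case True then show ?thesis by (simp add: zero_power)
    next
      case False
      then show ?thesis
        using that(1) \<delta>(1) unfolding Bd_def \<rho>1_def by (auto intro!: pow2_mult_tendsto_0 simp: N_nonneg)
    qed
    moreover have "L * \<bar>\<rho>1 - \<rho>'\<bar> \<le> L * \<delta>"
      using that \<delta>(1) L0 unfolding \<rho>1_def by (intro mult_left_mono) auto
    ultimately show ?thesis
      using rickart_propagate[OF H L, of \<rho>1 \<rho>'] that \<delta> unfolding \<rho>1_def Bd_def by auto
  qed
  have Bd_m: "Bd (min 1 (real m * (\<delta>/2)))" for m
  proof (induction m)
    case 0 show ?case by (simp add: Bd_def zero_power)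
  next
    case (Suc m)
    show ?case by (rule Bd_step[OF Suc.IH]) (use \<delta> in \<open>auto simp: min_def algebra_simps\<close>)
  qed
  obtain m :: nat where "2 / \<delta> < real m" using reals_Archimedean2 by blast
  then have "min 1 (real m * (\<delta>/2)) = 1" using \<delta> by (simp add: field_simps)
  then have "Bd 1" using Bd_m[of m] by simp
  then show ?thesis unfolding Bd_def by simp
qed

section \<open>Spectra of self-adjoint elements\<close>

definition selfadj :: "'b \<Rightarrow> bool" where
  "selfadj x \<longleftrightarrow> adj x = x"

lemma has_inv_near:
  assumes "has_inv (smul l0 e - x)"
  obtains \<eta> where "\<eta> > 0" "\<And>l. cmod (l - l0) < \<eta> \<Longrightarrow> has_inv (smul l e - x)"
proof -
  define y where "y = inv_elt (smul l0 e - x)"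
  define \<eta> where "\<eta> = 1 / (2 * N y + 1)"
  show ?thesis
  proof (rule that)
    show "\<eta> > 0" unfolding \<eta>_def using N_nonneg[of y] by simp
    fix l assume l: "cmod (l - l0) < \<eta>"
    have "2 * N y * N (smul (l - l0) e) \<le> 2 * N y * \<eta>"
      using l N_nonneg[of y] by (simp add: N_smul N_e mult_left_mono)
    also have "\<dots> \<le> 1" unfolding \<eta>_def using N_nonneg[of y] by (simp add: field_simps)
    finally have "has_inv (smul l0 e - x + smul (l - l0) e)"
      using inv_elt_perturb(1)[OF assms] unfolding y_def by blast
    then show "has_inv (smul l e - x)" by (simp add: smul_diff_scalar)
  qed
qed

lemma closed_spectrum: "closed (spectrum x)"
  unfolding closed_def open_dist
proof (intro ballI)
  fix l0 assume "l0 \<in> - spectrum x"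
  then obtain \<eta> where "\<eta> > 0" "\<And>l. cmod (l - l0) < \<eta> \<Longrightarrow> has_inv (smul l e - x)"
    using has_inv_near unfolding spectrum_def by auto
  then show "\<exists>\<eta>>0. \<forall>l. dist l l0 < \<eta> \<longrightarrow> l \<in> - spectrum x"
    unfolding spectrum_def dist_norm by auto
qed

lemma compact_spectrum: "compact (spectrum x)"
  unfolding compact_eq_bounded_closed bounded_iff using closed_spectrum spectrum_bound by blast

lemma spectrum_zero: "0 \<in> spectrum 0"
  unfolding spectrum_def using not_has_inv_0 by simp

lemma N_mpow_le_if_spectrum_subset:
  assumes "0 < r" "spectrum x \<subseteq> ball 0 r"
  shows "\<exists>k0. \<forall>k\<ge>k0. N (mpow x (2^k)) \<le> r^(2^k)"
proof -
  define x' where "x' = smul (of_real (1/r)) x"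
  have "has_inv (e - smul \<nu> x')" if "cmod \<nu> \<le> 1" for \<nu>
  proof (cases "\<nu> = 0")
    case True then show ?thesis using has_inv_e by simp
  next
    case False
    have "r \<le> cmod (of_real r / \<nu>)" using assms(1) that False by (simp add: norm_divide field_simps)
    then have "of_real r / \<nu> \<notin> spectrum x" using assms(2) by fastforce
    moreover have "e - smul \<nu> x' = smul (\<nu> / of_real r) (smul (of_real r / \<nu>) e - x)"
      unfolding x'_def using False assms(1) by (simp add: smul_diff smul_mult_scalar[symmetric])
    ultimately show ?thesis using False assms(1) by (simp add: spectrum_def has_inv_smul)
  qed
  then obtain k0 where k0: "\<And>k. k \<ge> k0 \<Longrightarrow> N (mpow x' (2^k)) \<le> 1" using rickart by blast
  have "N (mpow x' n) = N (mpow x n) / r^n" for n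
    unfolding x'_def using assms(1) by (simp add: mpow_smul N_smul norm_divide norm_power power_divide)
  then show ?thesis using k0 assms(1) by (auto simp: divide_le_eq)
qed

lemma N_mpow_selfadj:
  assumes "selfadj h"
  shows "N (mpow h (2^k)) = N h ^ 2^k"
proof (induction k)
  case 0 then show ?case by (simp add: m_e_right)
next
  case (Suc k)
  have "adj (mpow h (2^k)) = mpow h (2^k)" using assms unfolding selfadj_def by (simp add: adj_mpow)
  then have "N (mpow h (2 ^ Suc k)) = N (mpow h (2^k))^2"
    using N_cstar[of "mpow h (2^k)"] unfolding mpow_2_Suc by simp
  then show ?case using Suc by (simp add: power_mult[symmetric] mult.commute)
qed

lemma selfadj_N_le_if_spectrum_subset:
  assumes "selfadj h" "0 < r" "spectrum h \<subseteq> ball 0 r"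
  shows "N h \<le> r"
proof -
  obtain k0 where "\<And>k. k \<ge> k0 \<Longrightarrow> N (mpow h (2^k)) \<le> r^(2^k)"
    using N_mpow_le_if_spectrum_subset[OF assms(2,3)] by blast
  then have "N h ^ 2^k0 \<le> r ^ 2^k0" using N_mpow_selfadj[OF assms(1)] by (metis order_refl)
  then show ?thesis using assms(2) N_nonneg[of h] by (simp add: power_mono_iff)
qed

lemma selfadj_norm_in_spectrum:
  assumes h: "selfadj h"
  shows "\<exists>l\<in>spectrum h. cmod l = N h"
proof (cases "h = 0")
  case True then show ?thesis using spectrum_zero by force
next
  case False
  then have M: "0 < N h" using N_eq_0_iff[of h] N_nonneg[of h] by linarith
  have "spectrum h \<noteq> {}"
  proof
    assume "spectrum h = {}"
    then have "N h \<le> N h / 2" using selfadj_N_le_if_spectrum_subset[OF h, of "N h / 2"] M by simp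
    then show False using M by simp
  qed
  then obtain l where l: "l \<in> spectrum h" and max: "\<And>l'. l' \<in> spectrum h \<Longrightarrow> cmod l' \<le> cmod l"
    using continuous_attains_sup[OF compact_spectrum _ continuous_on_norm[OF continuous_on_id]]
    by blast
  have "N h \<le> cmod l"
  proof (rule ccontr)
    assume "\<not> N h \<le> cmod l"
    then have "spectrum h \<subseteq> ball 0 ((cmod l + N h) / 2)" using max by fastforce
    then have "N h \<le> (cmod l + N h) / 2"
      using selfadj_N_le_if_spectrum_subset[OF h] M norm_ge_zero[of l] by (meson add_nonneg_pos half_gt_zero)
    then show False using \<open>\<not> N h \<le> cmod l\<close> by simp
  qed
  then show ?thesis using spectrum_bound[OF l] l by force
qed

lemma selfadj_adj_shift:
  assumes "selfadj h"
  shows "adj (h + smul (\<i> * of_real t) e) \<diamond> (h + smul (\<i> * of_real t) e) = h \<diamond> h + smul (of_real (t^2)) e"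
proof -
  define w where "w = h + smul (\<i> * of_real t) e"
  have adj_w: "adj w = h - smul (\<i> * of_real t) e"
    using assms unfolding w_def selfadj_def by (simp add: adj_add adj_smul smul_minus_scalar)
  have "adj w \<diamond> w = h \<diamond> h + smul (\<i> * of_real t) h - smul (\<i> * of_real t) h
              - smul (\<i> * of_real t) (smul (\<i> * of_real t) e)"
    unfolding adj_w unfolding w_def
    by (simp add: m_add_right m_diff_left smul_m_left smul_m_right m_e_right m_e_left smul_diff algebra_simps)
  also have "- (\<i> * complex_of_real t * (\<i> * complex_of_real t)) = complex_of_real (t^2)"
    by (simp add: algebra_simps power2_eq_square)
  then have "smul (\<i> * of_real t) (smul (\<i> * of_real t) e) = - smul (of_real (t^2)) e"
    by (metis smul_mult_scalar smul_minus_scalar minus_minus)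
  finally show ?thesis unfolding w_def by simp
qed

lemma selfadj_spectrum_Im:
  assumes "selfadj h" "l \<in> spectrum h"
  shows "Im l = 0"
proof (rule ccontr)
  assume Im: "Im l \<noteq> 0"
  have bound: "(Re l)^2 + (Im l + t)^2 \<le> (N h)^2 + t^2" for t :: real
  proof -
    define w where "w = h + smul (\<i> * of_real t) e"
    have "l + \<i> * of_real t \<in> spectrum w"
      using assms(2) unfolding spectrum_def w_def by (simp add: smul_add_scalar algebra_simps)
    then have "(cmod (l + \<i> * of_real t))^2 \<le> (N w)^2"
      using spectrum_bound by (simp add: power_mono)
    also have "\<dots> = N (h \<diamond> h + smul (of_real (t^2)) e)"
      unfolding N_cstar[symmetric] w_def selfadj_adj_shift[OF assms(1)] ..
    also have "\<dots> \<le> N (h \<diamond> h) + N (smul (of_real (t^2)) e)" by (rule N_triangle)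
    also have "\<dots> \<le> (N h)^2 + t^2"
      using N_m[of h h] by (simp add: N_smul N_e power2_eq_square[of "N h"] del: of_real_power)
    finally show ?thesis by (simp add: cmod_power2 algebra_simps)
  qed
  define t where "t = ((N h)^2 + 1) / (2 * Im l)"
  have "(Re l)^2 + (Im l)^2 + 2 * Im l * t \<le> (N h)^2"
    using bound[of t] by (simp add: power2_eq_square algebra_simps)
  moreover have "2 * Im l * t = (N h)^2 + 1" unfolding t_def using Im by simp
  ultimately show False by (smt (verit) zero_le_power2)
qed

lemma selfadj_spectrum_real: "selfadj h \<Longrightarrow> z \<in> spectrum h \<Longrightarrow> z = of_real (Re z)"
  using selfadj_spectrum_Im by (simp add: complex_eq_iff)

definition peval :: "'b \<Rightarrow> complex poly \<Rightarrow> 'b" where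
  "peval x p = (\<Sum>i\<le>degree p. smul (coeff p i) (mpow x i))"

lemma peval_upto:
  assumes "degree p \<le> n"
  shows "peval x p = (\<Sum>i\<le>n. smul (coeff p i) (mpow x i))"
proof -
  have "(\<Sum>i\<le>n. smul (coeff p i) (mpow x i)) = (\<Sum>i\<le>degree p. smul (coeff p i) (mpow x i))"
  proof (rule sum.mono_neutral_right)
    show "\<forall>i\<in>{..n} - {..degree p}. smul (coeff p i) (mpow x i) = 0"
      by (auto simp: coeff_eq_0)
  qed (use assms in auto)
  then show ?thesis unfolding peval_def by simp
qed

lemma peval_add: "peval x (p + q) = peval x p + peval x q"
proof -
  define n where "n = max (degree p) (degree q)"
  have "degree (p + q) \<le> n" unfolding n_def by (rule degree_add_le) auto
  then show ?thesis
    using peval_upto[of p n x] peval_upto[of q n x] peval_upto[of "p + q" n x]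
    unfolding n_def by (simp add: smul_add_scalar sum.distrib)
qed

lemma peval_smult: "peval x (smult c p) = smul c (peval x p)"
proof -
  have "peval x (smult c p) = (\<Sum>i\<le>degree p. smul (coeff (smult c p) i) (mpow x i))"
    by (rule peval_upto) simp
  then show ?thesis unfolding peval_def by (simp add: smul_sum smul_mult_scalar)
qed

lemma peval_0[simp]: "peval x 0 = 0" unfolding peval_def by simp

lemma peval_const: "peval x [:c:] = smul c e" unfolding peval_def by simp

lemma peval_1: "peval x 1 = e" unfolding one_pCons peval_const by simp

lemma peval_minus: "peval x (- p) = - peval x p"
  using peval_smult[of x "-1" p] by (simp add: smul_minus_scalar)

lemma peval_diff: "peval x (p - q) = peval x p - peval x q"
  using peval_add[of x p "-q"] by (simp add: peval_minus)

lemma peval_pCons: "peval x (pCons a p) = smul a e + x \<diamond> peval x p"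
proof -
  define n where "n = degree p"
  have "peval x (pCons a p) = (\<Sum>i\<le>Suc n. smul (coeff (pCons a p) i) (mpow x i))"
    by (rule peval_upto) (simp add: n_def degree_pCons_le)
  also have "\<dots> = smul a e + (\<Sum>i\<le>n. smul (coeff p i) (mpow x (Suc i)))"
    by (subst sum.atMost_Suc_shift) simp
  also have "(\<Sum>i\<le>n. smul (coeff p i) (mpow x (Suc i))) = x \<diamond> peval x p"
    unfolding peval_def n_def by (simp add: m_sum_right smul_m_right)
  finally show ?thesis .
qed

lemma peval_X: "peval x [:0, 1:] = x"
  by (simp add: peval_pCons peval_const m_e_right)

lemma peval_mult: "peval x (p * q) = peval x p \<diamond> peval x q"
proof (induction p rule: pCons_induct)
  case 0 then show ?case by simp
next
  case (pCons a p)
  have "peval x (pCons a p * q) = peval x (smult a q + pCons 0 (p * q))" by simp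
  also have "\<dots> = smul a (peval x q) + x \<diamond> (peval x p \<diamond> peval x q)"
    by (simp add: peval_add peval_smult peval_pCons pCons.IH)
  also have "\<dots> = peval x (pCons a p) \<diamond> peval x q"
    by (simp add: peval_pCons m_add_left smul_m_left m_e_left m_assoc)
  finally show ?case .
qed

lemma peval_commute: "a \<diamond> x = x \<diamond> a \<Longrightarrow> a \<diamond> peval x p = peval x p \<diamond> a"
  unfolding peval_def by (simp add: m_sum_left m_sum_right smul_m_left smul_m_right mpow_commute)

lemma has_inv_peval_prod:
  fixes n :: nat
  assumes "\<And>i. i < n \<Longrightarrow> has_inv (peval x (f i))"
  shows "has_inv (peval x (\<Prod>i<n. f i))"
  using assms
proof (induction n)
  case 0 then show ?case by (simp add: peval_1 has_inv_e)
next
  case (Suc n)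
  have "peval x (\<Prod>i<Suc n. f i) = peval x (\<Prod>i<n. f i) \<diamond> peval x (f n)" by (simp add: peval_mult)
  then show ?case using Suc has_inv_m by simp
qed

lemma adj_peval: "adj (peval x p) = peval (adj x) (map_poly cnj p)"
proof -
  have "peval (adj x) (map_poly cnj p) = (\<Sum>i\<le>degree p. smul (coeff (map_poly cnj p) i) (mpow (adj x) i))"
    unfolding peval_def by (simp add: degree_map_poly)
  then show ?thesis unfolding peval_def by (simp add: adj_sum adj_smul adj_mpow coeff_map_poly)
qed

lemma selfadj_peval: "selfadj x \<Longrightarrow> real_poly p \<Longrightarrow> selfadj (peval x p)"
  unfolding selfadj_def by (simp add: adj_peval real_poly_map_cnj)

lemma chi_mpow: "chi (mpow x n) = chi x ^ n"
  by (induction n) (simp_all add: chi_e chi_m)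

lemma chi_zero: "chi 0 = 0"
  using chi_add[of 0 0] by simp

lemma chi_sum: "chi (sum f A) = (\<Sum>i\<in>A. chi (f i))"
  by (induction A rule: infinite_finite_induct) (simp_all add: chi_add chi_zero)

lemma chi_peval: "chi (peval x p) = poly p (chi x)"
  unfolding peval_def by (simp add: chi_sum chi_smul chi_mpow poly_altdef)

lemma chi_minus: "chi (- x) = - chi x"
  using chi_add[of x "-x"] by (simp add: chi_zero eq_neg_iff_add_eq_0 add.commute)

lemma chi_diff: "chi (x - y) = chi x - chi y"
  using chi_add[of x "-y"] by (simp add: chi_minus)

lemma spectrum_peval:
  assumes "spectrum x \<noteq> {}" "\<mu> \<in> spectrum (peval x p)"
  shows "\<exists>z\<in>spectrum x. poly p z = \<mu>"
proof -
  define q where "q = p - [:\<mu>:]"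
  have q: "peval x q = - (smul \<mu> e - peval x p)" unfolding q_def by (simp add: peval_diff peval_const)
  have nq: "\<not> has_inv (peval x q)"
    using assms(2) unfolding spectrum_def mem_Collect_eq q has_inv_minus_iff .
  show ?thesis
  proof (cases "degree q = 0")
    case True
    then obtain c where c: "q = [:c:]" by (meson degree_eq_zeroE)
    then have "c = 0" using nq has_inv_smul_iff[of c e] has_inv_e by (auto simp: peval_const)
    then show ?thesis using c assms(1) unfolding q_def by auto
  next
    case False
    obtain r where r: "smult (lead_coeff q) (\<Prod>i<degree q. [:-r i, 1:]) = q"
      using complex_poly_decompose' by blast
    have "lead_coeff q \<noteq> 0" using False by auto
    then have "\<not> has_inv (peval x (\<Prod>i<degree q. [:-r i, 1:]))"
      using nq has_inv_smul r peval_smult by metis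
    then obtain i where i: "i < degree q" "\<not> has_inv (peval x [:-r i, 1:])"
      using has_inv_peval_prod[where n="degree q" and x=x and f="\<lambda>i. [:-r i, 1:]"] by blast
    have "peval x [:-r i, 1:] = - (smul (r i) e - x)"
      by (simp add: peval_pCons peval_const m_e_right smul_minus_scalar)
    then have "\<not> has_inv (- (smul (r i) e - x))" using i(2) by simp
    then have "r i \<in> spectrum x" unfolding has_inv_minus_iff spectrum_def by simp
    moreover have "poly (\<Prod>i<degree q. [:-r i, 1:]) (r i) = 0"
      using i(1) by (auto simp: poly_prod prod_zero_iff)
    then have "poly q (r i) = 0" using r by (metis poly_smult mult_zero_right)
    then have "poly p (r i) = \<mu>" unfolding q_def by simp
    ultimately show ?thesis by blast
  qed
qed

lemma selfadj_peval_norm: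
  assumes h: "selfadj h" and p: "real_poly p"
  shows "\<exists>z\<in>spectrum h. N (peval h p) = cmod (poly p z)"
proof -
  obtain \<mu> where \<mu>: "\<mu> \<in> spectrum (peval h p)" "cmod \<mu> = N (peval h p)"
    using selfadj_norm_in_spectrum[OF selfadj_peval[OF h p]] by blast
  have "spectrum h \<noteq> {}" using selfadj_norm_in_spectrum[OF h] by blast
  then show ?thesis using spectrum_peval[OF _ \<mu>(1)] \<mu>(2) by metis
qed

lemma N_peval_le:
  assumes h: "selfadj h" and p: "real_poly p"
    and b: "\<And>t. \<bar>t\<bar> \<le> N h \<Longrightarrow> cmod (poly p (of_real t)) \<le> \<epsilon>"
  shows "N (peval h p) \<le> \<epsilon>"
proof -
  obtain z where z: "z \<in> spectrum h" "N (peval h p) = cmod (poly p z)"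
    using selfadj_peval_norm[OF h p] by blast
  have "z = of_real (Re z)" using selfadj_spectrum_real[OF h z(1)] .
  moreover have "\<bar>Re z\<bar> \<le> N h" using spectrum_bound[OF z(1)] abs_Re_le_cmod order_trans by blast
  ultimately show ?thesis using b[of "Re z"] z(2) by metis
qed

section \<open>Positive elements\<close>

definition positive :: "'b \<Rightarrow> bool" where
  "positive x \<longleftrightarrow> selfadj x \<and> (\<forall>l\<in>spectrum x. 0 \<le> Re l)"

lemma spectrum_shift: "l \<in> spectrum x \<longleftrightarrow> of_real t - l \<in> spectrum (smul (of_real t) e - x)"
proof -
  have eq: "smul (of_real t - l) e - (smul (of_real t) e - x) = - (smul l e - x)"
    by (simp add: smul_diff_scalar)
  show ?thesis unfolding spectrum_def by (simp only: mem_Collect_eq eq has_inv_minus_iff)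
qed

lemma selfadj_shift: "selfadj x \<Longrightarrow> selfadj (smul (of_real t) e - x)"
  unfolding selfadj_def by (simp add: adj_diff adj_smul)

lemma selfadj_add: "selfadj x \<Longrightarrow> selfadj y \<Longrightarrow> selfadj (x + y)"
  unfolding selfadj_def by (simp add: adj_add)

lemma selfadj_scaleR: "selfadj x \<Longrightarrow> selfadj (scaleR r x)"
  unfolding selfadj_def by (simp add: adj_scaleR)

lemma positive_if_N_shift_le:
  assumes "selfadj x" "N (smul (of_real t) e - x) \<le> t"
  shows "positive x"
  unfolding positive_def
proof (intro conjI assms ballI)
  fix l assume l: "l \<in> spectrum x"
  have lr: "l = of_real (Re l)" using selfadj_spectrum_real[OF assms(1) l] .
  show "0 \<le> Re l"
  proof (rule ccontr)
    assume "\<not> 0 \<le> Re l"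
    have "of_real t - l \<in> spectrum (smul (of_real t) e - x)" using l spectrum_shift by blast
    then have "cmod (of_real t - l) \<le> t" using spectrum_bound assms(2) order_trans by blast
    moreover have "cmod (of_real t - l) = \<bar>t - Re l\<bar>"
      by (subst lr) (simp flip: of_real_diff)
    ultimately show False using \<open>\<not> 0 \<le> Re l\<close> by auto
  qed
qed

lemma N_shift_le_if_positive:
  assumes "positive x" "N x \<le> t"
  shows "N (smul (of_real t) e - x) \<le> t"
proof -
  have sx: "selfadj x" using assms(1) positive_def by blast
  obtain \<mu> where mu: "\<mu> \<in> spectrum (smul (of_real t) e - x)" "cmod \<mu> = N (smul (of_real t) e - x)"
    using selfadj_norm_in_spectrum[OF selfadj_shift[OF sx]] by blast
  define l where "l = of_real t - \<mu>"
  have l: "l \<in> spectrum x" using mu(1) spectrum_shift[of l x t] unfolding l_def by simp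
  have lr: "l = of_real (Re l)" using selfadj_spectrum_real[OF sx l] .
  have "0 \<le> Re l" using assms(1) l unfolding positive_def by blast
  moreover have "Re l \<le> t" using spectrum_bound[OF l] assms(2) abs_Re_le_cmod[of l] by linarith
  moreover have "\<mu> = of_real (t - Re l)" unfolding l_def using lr
    by (metis add_diff_cancel_left' diff_add_cancel l_def of_real_diff)
  then have "cmod \<mu> = \<bar>t - Re l\<bar>" by (simp del: of_real_diff)
  ultimately show ?thesis using mu(2) by linarith
qed

lemma positive_add:
  assumes "positive x" "positive y"
  shows "positive (x + y)"
proof (rule positive_if_N_shift_le)
  show "selfadj (x + y)" using assms selfadj_add positive_def by blast
  have "N (smul (of_real (N x + N y)) e - (x + y)) =
        N ((smul (of_real (N x)) e - x) + (smul (of_real (N y)) e - y))"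
    by (simp add: smul_add_scalar algebra_simps)
  also have "\<dots> \<le> N x + N y"
    using N_triangle N_shift_le_if_positive[OF assms(1) order_refl] N_shift_le_if_positive[OF assms(2) order_refl]
    by (meson add_mono order_trans)
  finally show "N (smul (of_real (N x + N y)) e - (x + y)) \<le> N x + N y" .
qed

lemma spectrum_minus: "l \<in> spectrum (- x) \<longleftrightarrow> - l \<in> spectrum x"
proof -
  have eq: "smul l e - - x = - (smul (- l) e - x)" by (simp add: smul_minus_scalar)
  show ?thesis unfolding spectrum_def by (simp only: mem_Collect_eq eq has_inv_minus_iff)
qed

lemma positive_square:
  assumes h: "selfadj h"
  shows "positive (h \<diamond> h)"
  unfolding positive_def
proof (intro conjI ballI)
  show "selfadj (h \<diamond> h)" using h unfolding selfadj_def by (simp add: adj_m)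
  fix l assume l: "l \<in> spectrum (h \<diamond> h)"
  define s where "s = csqrt l"
  have ss: "s * s = l" unfolding s_def by (simp add: power2_eq_square[symmetric])
  have a1: "smul s e \<diamond> smul s e = smul l e" by (simp add: smul_m_left smul_m_right m_e_left smul_mult_scalar[symmetric] ss)
  have a2: "smul s e \<diamond> h = smul s h" by (simp add: smul_m_left m_e_left)
  have a3: "h \<diamond> smul s e = smul s h" by (simp add: smul_m_right m_e_right)
  have "(smul s e - h) \<diamond> (smul s e + h) = (smul s e \<diamond> smul s e + smul s e \<diamond> h) - (h \<diamond> smul s e + h \<diamond> h)"
    by (simp add: m_add_right m_diff_left algebra_simps)
  also have "\<dots> = smul l e - h \<diamond> h" unfolding a1 a2 a3 by simp
  finally have fac: "smul l e - h \<diamond> h = (smul s e - h) \<diamond> (smul s e + h)" by simp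
  have "\<not> has_inv ((smul s e - h) \<diamond> (smul s e + h))" using l fac unfolding spectrum_def by simp
  then have "\<not> has_inv (smul s e - h) \<or> \<not> has_inv (smul s e + h)" using has_inv_m by blast
  then have "s \<in> spectrum h \<or> - s \<in> spectrum h"
  proof
    assume "\<not> has_inv (smul s e + h)"
    moreover have eq: "smul s e + h = - (smul (- s) e - h)" by (simp add: smul_minus_scalar)
    ultimately have "\<not> has_inv (smul (- s) e - h)" using has_inv_minus_iff by metis
    then show ?thesis unfolding spectrum_def by simp
  qed (simp add: spectrum_def)
  then have "Im s = 0" using selfadj_spectrum_Im[OF h] by force
  then show "0 \<le> Re l" unfolding ss[symmetric] by simp
qed

lemma positive_antisym:
  assumes "positive x" "positive (- x)"
  shows "x = 0"
proof -
  have sx: "selfadj x" using assms positive_def by blast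
  obtain l where l: "l \<in> spectrum x" "cmod l = N x" using selfadj_norm_in_spectrum[OF sx] by blast
  have "0 \<le> Re l" using assms(1) l(1) positive_def by blast
  moreover have "0 \<le> Re (- l)" using assms(2) l(1) spectrum_minus[of "-l" x] positive_def by auto
  moreover have "Im l = 0" using selfadj_spectrum_Im[OF sx l(1)] .
  ultimately have "l = 0" by (simp add: complex_eq_iff)
  then show ?thesis using l(2) N_eq_0_iff by simp
qed

lemma smul_2: "smul 2 x = x + x"
  using smul_of_real[of 2 x] by (simp add: scaleR_2)

lemma positive_if_double:
  assumes "positive (x + x)"
  shows "positive x"
  unfolding positive_def
proof (intro conjI ballI)
  have "selfadj (x + x)" using assms positive_def by blast
  then have "selfadj (scaleR (1/2) (x + x))" by (rule selfadj_scaleR)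
  then show "selfadj x" by (simp add: scaleR_2[symmetric])
  fix l assume l: "l \<in> spectrum x"
  have "smul (2 * l) e - (x + x) = smul 2 (smul l e - x)"
    by (simp add: smul_diff smul_mult_scalar[symmetric] smul_2)
  then have "2 * l \<in> spectrum (x + x)" using l has_inv_smul_iff[of 2] unfolding spectrum_def by simp
  then have "0 \<le> Re (2 * l)" using assms positive_def by blast
  then show "0 \<le> Re l" by simp
qed

lemma has_inv_swap:
  assumes "l \<noteq> 0" "has_inv (smul l e - x \<diamond> y)"
  shows "has_inv (smul l e - y \<diamond> x)"
proof -
  obtain w where w: "is_inv (smul l e - x \<diamond> y) w" using assms(2) has_inv_def by blast
  have w1: "(smul l e - x \<diamond> y) \<diamond> w = e" and w2: "w \<diamond> (smul l e - x \<diamond> y) = e"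
    using w unfolding is_inv_def by auto
  define v where "v = e + y \<diamond> w \<diamond> x"
  have 1: "(smul l e - y \<diamond> x) \<diamond> v = smul l e"
  proof -
    have "(smul l e - y \<diamond> x) \<diamond> v = smul l e - y \<diamond> x + (smul l (y \<diamond> w \<diamond> x) - y \<diamond> x \<diamond> y \<diamond> w \<diamond> x)"
      unfolding v_def by (simp add: m_add_right m_diff_left smul_m_left m_e_left m_e_right m_assoc smul_add)
    also have "smul l (y \<diamond> w \<diamond> x) - y \<diamond> x \<diamond> y \<diamond> w \<diamond> x = y \<diamond> ((smul l e - x \<diamond> y) \<diamond> w) \<diamond> x"
      by (simp add: m_diff_left m_diff_right smul_m_left smul_m_right m_e_left m_assoc)
    also have "\<dots> = y \<diamond> x" using w1 by (simp add: m_e_right)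
    finally show ?thesis by simp
  qed
  have 2: "v \<diamond> (smul l e - y \<diamond> x) = smul l e"
  proof -
    have "v \<diamond> (smul l e - y \<diamond> x) = smul l e - y \<diamond> x + (smul l (y \<diamond> w \<diamond> x) - y \<diamond> w \<diamond> x \<diamond> y \<diamond> x)"
      unfolding v_def by (simp add: m_add_left m_diff_right smul_m_right m_e_left m_e_right m_assoc smul_add)
    also have "smul l (y \<diamond> w \<diamond> x) - y \<diamond> w \<diamond> x \<diamond> y \<diamond> x = y \<diamond> (w \<diamond> (smul l e - x \<diamond> y)) \<diamond> x"
      by (simp add: m_diff_left m_diff_right smul_m_left smul_m_right m_e_right m_assoc)
    also have "\<dots> = y \<diamond> x" using w2 by (simp add: m_e_right)
    finally show ?thesis by simp
  qed
  have "is_inv (smul l e - y \<diamond> x) (smul (inverse l) v)"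
    unfolding is_inv_def using 1 2 assms(1) by (simp add: smul_m_left smul_m_right smul_mult_scalar[symmetric])
  then show ?thesis unfolding has_inv_def by blast
qed

lemma selfadj_eq_0_if_spectrum_subset:
  assumes "selfadj x" "spectrum x \<subseteq> {0}"
  shows "x = 0"
  using selfadj_norm_in_spectrum[OF assms(1)] assms(2) N_eq_0_iff by force

lemma cartesian_square_sum:
  "(c + adj c) \<diamond> (c + adj c) + smul (- \<i>) (c - adj c) \<diamond> smul (- \<i>) (c - adj c)
     = (c \<diamond> adj c + c \<diamond> adj c) + (adj c \<diamond> c + adj c \<diamond> c)"
proof -
  have "smul (- \<i>) (c - adj c) \<diamond> smul (- \<i>) (c - adj c)
      = smul ((- \<i>) * (- \<i>)) ((c - adj c) \<diamond> (c - adj c))"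
    by (simp only: smul_m_left smul_m_right smul_mult_scalar)
  also have "\<dots> = - ((c - adj c) \<diamond> (c - adj c))" by (simp add: smul_minus_scalar)
  finally show ?thesis by (simp add: m_add_left m_add_right m_diff_left m_diff_right algebra_simps)
qed

lemma positive_m_adj_if_adj_m_neg_square:
  assumes h: "selfadj h" and c: "adj c \<diamond> c = - (h \<diamond> h)"
  shows "positive (c \<diamond> adj c)"
proof -
  have x: "selfadj (c + adj c)" unfolding selfadj_def by (simp add: adj_add adj_adj add.commute)
  have y: "selfadj (smul (- \<i>) (c - adj c))"
    unfolding selfadj_def by (simp add: adj_smul adj_diff adj_adj smul_diff smul_minus_scalar)
  have "c \<diamond> adj c + c \<diamond> adj c
      = ((c + adj c) \<diamond> (c + adj c) + smul (- \<i>) (c - adj c) \<diamond> smul (- \<i>) (c - adj c))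
        + (h \<diamond> h + h \<diamond> h)"
    unfolding cartesian_square_sum c by simp
  also have "positive \<dots>"
    by (intro positive_add positive_square x y h)
  finally show ?thesis by (rule positive_if_double)
qed

text \<open>The spectra of \<open>c\<^sup>* c\<close> and \<open>c c\<^sup>*\<close> agree away from \<open>0\<close>; here the first is \<open>\<le> 0\<close> and the
  second \<open>\<ge> 0\<close>.\<close>

lemma adj_m_self_eq_neg_square:
  assumes h: "selfadj h" and c: "adj c \<diamond> c = - (h \<diamond> h)"
  shows "c = 0"
proof -
  have sX: "selfadj (adj c \<diamond> c)" unfolding selfadj_def by (simp add: adj_m adj_adj)
  have "l = 0" if l: "l \<in> spectrum (adj c \<diamond> c)" for l
  proof (rule ccontr)
    assume "l \<noteq> 0"
    then have "l \<in> spectrum (c \<diamond> adj c)" using l has_inv_swap[of l c "adj c"] unfolding spectrum_def by auto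
    then have "0 \<le> Re l"
      using positive_m_adj_if_adj_m_neg_square[OF h c] positive_def by blast
    moreover have "- l \<in> spectrum (h \<diamond> h)" using l c spectrum_minus[of l "h \<diamond> h"] by simp
    then have "0 \<le> Re (- l)" using positive_square[OF h] positive_def by blast
    moreover have "Im l = 0" using selfadj_spectrum_Im[OF sX l] .
    ultimately show False using \<open>l \<noteq> 0\<close> by (simp add: complex_eq_iff)
  qed
  then have "adj c \<diamond> c = 0" using selfadj_eq_0_if_spectrum_subset[OF sX] by blast
  then have "N c ^ 2 = 0" using N_cstar[of c] by simp
  then show ?thesis using N_eq_0_iff by simp
qed

section \<open>Continuous functional calculus\<close>

lemma N_m_diff_le: "N (x \<diamond> y - u \<diamond> v) \<le> N (x - u) * N y + N u * N (y - v)"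
proof -
  have "x \<diamond> y - u \<diamond> v = (x - u) \<diamond> y + u \<diamond> (y - v)" by (simp add: m_diff_left m_diff_right)
  then have "N (x \<diamond> y - u \<diamond> v) \<le> N ((x - u) \<diamond> y) + N (u \<diamond> (y - v))"
    by (metis N_triangle)
  also have "\<dots> \<le> N (x - u) * N y + N u * N (y - v)"
    by (intro add_mono N_m)
  finally show ?thesis .
qed

lemma eq_0_if_N_le_eps:
  assumes "\<And>\<epsilon>. \<epsilon> > 0 \<Longrightarrow> N x \<le> c * \<epsilon>" "c \<ge> 0"
  shows "x = 0"
proof -
  have "N x \<le> 0 + \<epsilon>" if "\<epsilon> > 0" for \<epsilon>
  proof -
    have "N x \<le> c * (\<epsilon> / (c + 1))" using assms(1)[of "\<epsilon> / (c + 1)"] that assms(2) by simp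
    also have "\<dots> \<le> \<epsilon>" using that assms(2) by (simp add: field_simps)
    finally show ?thesis by simp
  qed
  then have "N x \<le> 0" by (rule field_le_epsilon)
  then show ?thesis using N_nonneg[of x] N_eq_0_iff by simp
qed

lemma N_peval_diff_le:
  assumes h: "selfadj h" and "poly_approx (N h) f p \<epsilon>" "poly_approx (N h) f q \<delta>"
  shows "N (peval h p - peval h q) \<le> \<epsilon> + \<delta>"
proof -
  have "poly_approx (N h) (\<lambda>t. f t + - f t) (p + - q) (\<epsilon> + \<delta>)"
    using assms(2,3) by (intro poly_approx_add poly_approx_minus)
  then have "N (peval h (p + - q)) \<le> \<epsilon> + \<delta>"
    unfolding poly_approx_def by (intro N_peval_le[OF h]) (auto simp: norm_minus_commute)
  then show ?thesis by (simp add: peval_diff)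
qed

text \<open>\<open>fun_calc h f y\<close> says that \<open>y = f(h)\<close> in the continuous functional calculus: \<open>y\<close> is the limit
  of \<open>p(h)\<close> for real polynomials \<open>p\<close> converging uniformly to \<open>f\<close> on \<open>[-N h, N h]\<close>, an interval
  containing the spectrum of a self-adjoint \<open>h\<close>.\<close>

definition fun_calc :: "'b \<Rightarrow> (real \<Rightarrow> real) \<Rightarrow> 'b \<Rightarrow> bool" where
  "fun_calc h f y \<longleftrightarrow> (\<forall>\<epsilon>>0. \<exists>p. poly_approx (N h) f p \<epsilon> \<and> N (y - peval h p) \<le> \<epsilon>)"

lemma fun_calcD:
  assumes "fun_calc h f y" "\<epsilon> > 0"
  obtains p where "poly_approx (N h) f p \<epsilon>" "N (y - peval h p) \<le> \<epsilon>"
  using assms unfolding fun_calc_def by blast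

lemma fun_calc_cong:
  assumes "fun_calc h f y" "\<And>t. \<bar>t\<bar> \<le> N h \<Longrightarrow> f t = g t"
  shows "fun_calc h g y"
  using assms unfolding fun_calc_def poly_approx_def by metis

lemma fun_calc_id: "fun_calc h (\<lambda>t. t) h"
  unfolding fun_calc_def poly_approx_def using real_poly_X by (auto simp: peval_X)

lemma fun_calc_zero: "fun_calc h (\<lambda>t. 0) 0"
  unfolding fun_calc_def poly_approx_def by (auto intro!: exI[of _ 0] simp: real_poly_def)

lemma fun_calc_unique:
  assumes h: "selfadj h" and "fun_calc h f y" "fun_calc h f y'"
  shows "y = y'"
proof -
  have "y - y' = 0"
  proof (rule eq_0_if_N_le_eps[of _ 4])
    fix \<epsilon> :: real assume \<epsilon>: "\<epsilon> > 0"
    obtain p where p: "poly_approx (N h) f p \<epsilon>" "N (y - peval h p) \<le> \<epsilon>"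
      using fun_calcD[OF assms(2) \<epsilon>] by blast
    obtain q where q: "poly_approx (N h) f q \<epsilon>" "N (y' - peval h q) \<le> \<epsilon>"
      using fun_calcD[OF assms(3) \<epsilon>] by blast
    have "N (y - y') \<le> N (y - peval h p) + N (peval h p - peval h q) + N (peval h q - y')"
      using N_diff_triangle[of y y' "peval h p"] N_diff_triangle[of "peval h p" y' "peval h q"]
      by simp
    then show "N (y - y') \<le> 4 * \<epsilon>"
      using p(2) q(2) N_peval_diff_le[OF h p(1) q(1)] N_diff_commute[of y'] by simp
  qed simp
  then show ?thesis by simp
qed

lemma fun_calc_add:
  assumes "fun_calc h f y" "fun_calc h g y'"
  shows "fun_calc h (\<lambda>t. f t + g t) (y + y')"
  unfolding fun_calc_def
proof (intro allI impI)
  fix \<epsilon> :: real assume "\<epsilon> > 0"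
  then have \<epsilon>: "\<epsilon>/2 > 0" by simp
  obtain p where p: "poly_approx (N h) f p (\<epsilon>/2)" "N (y - peval h p) \<le> \<epsilon>/2"
    using fun_calcD[OF assms(1) \<epsilon>] by blast
  obtain q where q: "poly_approx (N h) g q (\<epsilon>/2)" "N (y' - peval h q) \<le> \<epsilon>/2"
    using fun_calcD[OF assms(2) \<epsilon>] by blast
  have "N (y + y' - peval h (p + q)) \<le> N (y - peval h p) + N (y' - peval h q)"
    using N_triangle[of "y - peval h p" "y' - peval h q"] by (simp add: peval_add algebra_simps)
  then show "\<exists>r. poly_approx (N h) (\<lambda>t. f t + g t) r \<epsilon> \<and> N (y + y' - peval h r) \<le> \<epsilon>"
    using poly_approx_add[OF p(1) q(1)] p(2) q(2) by (intro exI[of _ "p + q"]) simp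
qed

lemma fun_calc_minus:
  assumes "fun_calc h f y"
  shows "fun_calc h (\<lambda>t. - f t) (- y)"
  unfolding fun_calc_def
proof (intro allI impI)
  fix \<epsilon> :: real assume "\<epsilon> > 0"
  then obtain p where p: "poly_approx (N h) f p \<epsilon>" "N (y - peval h p) \<le> \<epsilon>"
    using fun_calcD assms by metis
  have "N (- y - peval h (- p)) = N (y - peval h p)"
    using N_minus[of "y - peval h p"] by (simp add: peval_minus)
  then show "\<exists>r. poly_approx (N h) (\<lambda>t. - f t) r \<epsilon> \<and> N (- y - peval h r) \<le> \<epsilon>"
    using poly_approx_minus[OF p(1)] p(2) by (intro exI[of _ "- p"]) simp
qed

lemma fun_calc_diff:
  assumes "fun_calc h f y" "fun_calc h g y'"
  shows "fun_calc h (\<lambda>t. f t - g t) (y - y')"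
  using fun_calc_add[OF assms(1) fun_calc_minus[OF assms(2)]] by simp

lemma fun_calc_mult:
  assumes h: "selfadj h" and fy: "fun_calc h f y" and gy: "fun_calc h g y'"
    and cont: "continuous_on {-N h..N h} f" "continuous_on {-N h..N h} g"
  shows "fun_calc h (\<lambda>t. f t * g t) (y \<diamond> y')"
  unfolding fun_calc_def
proof (intro allI impI)
  fix \<epsilon> :: real assume \<epsilon>: "\<epsilon> > 0"
  obtain B where B0: "0 \<le> B" and B: "\<And>t. \<bar>t\<bar> \<le> N h \<Longrightarrow> \<bar>f t\<bar> \<le> B \<and> \<bar>g t\<bar> \<le> B"
    using continuous_on_Icc_common_bound[OF cont] by blast
  define K where "K = 2 * B + 2 + N y'"
  have K: "K > 0" unfolding K_def using B0 N_nonneg[of y'] by simp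
  define \<delta> where "\<delta> = min 1 (\<epsilon> / K)"
  have \<delta>: "0 < \<delta>" "\<delta> \<le> 1" "\<delta> * K \<le> \<epsilon>" unfolding \<delta>_def using \<epsilon> K by (auto simp: field_simps min_def)
  obtain p where p: "poly_approx (N h) f p \<delta>" "N (y - peval h p) \<le> \<delta>"
    using fun_calcD[OF fy \<delta>(1)] by blast
  obtain q where q: "poly_approx (N h) g q \<delta>" "N (y' - peval h q) \<le> \<delta>"
    using fun_calcD[OF gy \<delta>(1)] by blast
  have "poly_approx (N h) (\<lambda>t. f t * g t) (p * q) (\<delta> * (2 * B + 1))"
    using p(1) q(1) \<delta> B0 B by (intro poly_approx_mult) auto
  moreover have "\<delta> * (2 * B + 1) \<le> \<delta> * K"
    unfolding K_def using \<delta>(1) N_nonneg[of y'] by (intro mult_left_mono) auto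
  ultimately have "poly_approx (N h) (\<lambda>t. f t * g t) (p * q) \<epsilon>"
    using \<delta>(3) poly_approx_mono by fastforce
  moreover have "N (y \<diamond> y' - peval h (p * q)) \<le> \<epsilon>"
  proof -
    have "cmod (poly p (of_real t)) \<le> B + 1" if "\<bar>t\<bar> \<le> N h" for t
      using poly_approx_bound[OF p(1) that] B[OF that] \<delta>(2) by linarith
    then have "N (peval h p) \<le> B + 1"
      using p(1) unfolding poly_approx_def by (intro N_peval_le[OF h]) auto
    then have "N (peval h p) * N (y' - peval h q) \<le> (B + 1) * \<delta>"
      using q(2) B0 by (intro mult_mono) (auto simp: N_nonneg)
    moreover have "N (y - peval h p) * N y' \<le> \<delta> * N y'"
      using p(2) by (intro mult_right_mono N_nonneg)
    ultimately have "N (y \<diamond> y' - peval h p \<diamond> peval h q) \<le> \<delta> * N y' + (B + 1) * \<delta>"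
      using N_m_diff_le[of y y' "peval h p" "peval h q"] by linarith
    also have "\<dots> \<le> \<delta> * K" unfolding K_def using \<delta> B0 by (simp add: algebra_simps)
    finally show ?thesis using \<delta>(3) by (simp add: peval_mult)
  qed
  ultimately show "\<exists>r. poly_approx (N h) (\<lambda>t. f t * g t) r \<epsilon> \<and> N (y \<diamond> y' - peval h r) \<le> \<epsilon>"
    by blast
qed

lemma fun_calc_mult_cong:
  assumes "selfadj h" "fun_calc h f y" "fun_calc h g y'"
    "continuous_on {-N h..N h} f" "continuous_on {-N h..N h} g"
    "\<And>t. \<bar>t\<bar> \<le> N h \<Longrightarrow> f t * g t = k t"
  shows "fun_calc h k (y \<diamond> y')"
  using fun_calc_cong[OF fun_calc_mult[OF assms(1-5)] assms(6)] .

lemma fun_calc_selfadj: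
  assumes "fun_calc h f y" "selfadj h"
  shows "selfadj y"
proof -
  have "y - adj y = 0"
  proof (rule eq_0_if_N_le_eps[of _ 2])
    fix \<epsilon> :: real assume \<epsilon>: "\<epsilon> > 0"
    obtain p where p: "poly_approx (N h) f p \<epsilon>" "N (y - peval h p) \<le> \<epsilon>"
      using fun_calcD[OF assms(1) \<epsilon>] by blast
    have "adj (peval h p) = peval h p"
      using selfadj_peval[OF assms(2)] p(1) unfolding poly_approx_def selfadj_def by blast
    then have "y - adj y = (y - peval h p) + adj (peval h p - y)" by (simp add: adj_diff)
    then have "N (y - adj y) \<le> N (y - peval h p) + N (peval h p - y)" by (metis N_triangle N_adj)
    then show "N (y - adj y) \<le> 2 * \<epsilon>" using p(2) N_diff_commute[of y] by simp
  qed simp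
  then show ?thesis unfolding selfadj_def by simp
qed

lemma fun_calc_commute:
  assumes "fun_calc h f y" "a \<diamond> h = h \<diamond> a"
  shows "a \<diamond> y = y \<diamond> a"
proof -
  have "a \<diamond> y - y \<diamond> a = 0"
  proof (rule eq_0_if_N_le_eps[of _ "2 * N a"])
    fix \<epsilon> :: real assume \<epsilon>: "\<epsilon> > 0"
    obtain p where p: "N (y - peval h p) \<le> \<epsilon>"
      using fun_calcD[OF assms(1) \<epsilon>] by blast
    have "a \<diamond> y - y \<diamond> a = a \<diamond> (y - peval h p) + (peval h p - y) \<diamond> a"
      using peval_commute[OF assms(2)] by (simp add: m_diff_left m_diff_right)
    then have "N (a \<diamond> y - y \<diamond> a) \<le> N (a \<diamond> (y - peval h p)) + N ((peval h p - y) \<diamond> a)"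
      by (metis N_triangle)
    also have "\<dots> \<le> N a * N (y - peval h p) + N (peval h p - y) * N a"
      by (intro add_mono N_m)
    also have "\<dots> \<le> N a * \<epsilon> + \<epsilon> * N a"
      using p \<epsilon> N_diff_commute[of y] by (intro add_mono mult_mono) (auto simp: N_nonneg)
    finally show "N (a \<diamond> y - y \<diamond> a) \<le> 2 * N a * \<epsilon>" by (simp add: algebra_simps)
  qed (simp add: N_nonneg)
  then show ?thesis by simp
qed

lemma fun_calc_chi:
  assumes "fun_calc h f y" "chi h = 0" "f 0 = 0"
  shows "chi y = 0"
proof -
  have "cmod (chi y) \<le> 0 + \<epsilon>" if \<epsilon>: "\<epsilon> > 0" for \<epsilon>
  proof -
    obtain p where p: "poly_approx (N h) f p (\<epsilon>/2)" "N (y - peval h p) \<le> \<epsilon>/2"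
      using fun_calcD[OF assms(1)] \<epsilon> half_gt_zero by blast
    have "chi y = chi (y - peval h p) + poly p 0"
      using chi_peval[of h p] assms(2) by (simp add: chi_diff)
    then have "cmod (chi y) \<le> cmod (chi (y - peval h p)) + cmod (poly p 0)" by (metis norm_triangle_ineq)
    moreover have "cmod (chi (y - peval h p)) \<le> \<epsilon>/2" using chi_bound p(2) order_trans by blast
    moreover have "cmod (poly p 0) \<le> \<epsilon>/2"
      using p(1) assms(3) N_nonneg[of h] unfolding poly_approx_def by (metis abs_zero of_real_0 diff_0 norm_minus_cancel)
    ultimately show ?thesis by simp
  qed
  then have "cmod (chi y) \<le> 0" by (rule field_le_epsilon)
  then show ?thesis by simp
qed

lemma fun_calc_positive:
  assumes h: "selfadj h" and fy: "fun_calc h f y"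
    and f: "\<And>t. \<bar>t\<bar> \<le> N h \<Longrightarrow> 0 \<le> f t \<and> f t \<le> T"
  shows "positive y"
proof (rule positive_if_N_shift_le)
  show "selfadj y" by (rule fun_calc_selfadj[OF fy h])
  have "N (smul (of_real T) e - y) \<le> T + \<epsilon>" if \<epsilon>: "\<epsilon> > 0" for \<epsilon>
  proof -
    obtain p where p: "poly_approx (N h) f p (\<epsilon>/2)" "N (y - peval h p) \<le> \<epsilon>/2"
      using fun_calcD[OF fy] \<epsilon> half_gt_zero by blast
    have q: "poly_approx (N h) (\<lambda>t. T + - f t) ([:of_real T:] + - p) (0 + \<epsilon>/2)"
      using real_poly_const by (intro poly_approx_add poly_approx_minus p(1)) (simp add: poly_approx_def)
    have "N (peval h ([:of_real T:] + - p)) \<le> T + \<epsilon>/2"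
    proof (rule N_peval_le[OF h])
      show "real_poly ([:of_real T:] + - p)" using q unfolding poly_approx_def by blast
      fix t :: real assume t: "\<bar>t\<bar> \<le> N h"
      show "cmod (poly ([:of_real T:] + - p) (of_real t)) \<le> T + \<epsilon>/2"
        using poly_approx_bound[OF q t] f[OF t] by simp
    qed
    then have "N (smul (of_real T) e - peval h p) \<le> T + \<epsilon>/2" by (simp add: peval_diff peval_const)
    moreover have "N (smul (of_real T) e - y) \<le> N (smul (of_real T) e - peval h p) + N (peval h p - y)"
      by (rule N_diff_triangle)
    ultimately show ?thesis using p(2) N_diff_commute[of y] by simp
  qed
  then show "N (smul (of_real T) e - y) \<le> T" by (rule field_le_epsilon)
qed

lemma Cauchy_if_N_bound:
  assumes "\<And>k m n. k \<le> m \<Longrightarrow> k \<le> n \<Longrightarrow> N (X m - X n) \<le> B k" "B \<longlonglongrightarrow> 0"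
  shows "Cauchy X"
proof (rule metric_CauchyI)
  fix \<epsilon> :: real assume "0 < \<epsilon>"
  then obtain k where k: "B k < c1 * \<epsilon>"
    using order_tendstoD(2)[OF assms(2), of "c1 * \<epsilon>"] c1_pos
    by (auto simp: eventually_sequentially)
  have "dist (X m) (X n) < \<epsilon>" if "k \<le> m" "k \<le> n" for m n
  proof -
    have "dist (X m) (X n) \<le> N (X m - X n) / c1" unfolding dist_norm by (rule norm_le_N)
    also have "\<dots> < \<epsilon>" using assms(1)[OF that] k c1_pos by (simp add: divide_less_eq mult.commute)
    finally show ?thesis .
  qed
  then show "\<exists>M. \<forall>m\<ge>M. \<forall>n\<ge>M. dist (X m) (X n) < \<epsilon>" by blast
qed

lemma fun_calc_exists:
  assumes h: "selfadj h" and f: "continuous_on {-N h..N h} f"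
  obtains y where "fun_calc h f y"
proof -
  define \<epsilon> where "\<epsilon> k = inverse (real (Suc k))" for k
  have \<epsilon>0: "(\<lambda>k. 2 * \<epsilon> k) \<longlonglongrightarrow> 0"
    unfolding \<epsilon>_def using tendsto_mult_right_zero[OF LIMSEQ_inverse_real_of_nat] .
  have "\<forall>k. \<exists>p. poly_approx (N h) f p (\<epsilon> k)" using real_poly_approx[OF f] by (simp add: \<epsilon>_def)
  then obtain P where P: "\<And>k. poly_approx (N h) f (P k) (\<epsilon> k)" by metis
  define X where "X k = peval h (P k)" for k
  have close: "N (X m - X n) \<le> 2 * \<epsilon> k" if "k \<le> m" "k \<le> n" for k m n
  proof -
    have "\<epsilon> m \<le> \<epsilon> k" "\<epsilon> n \<le> \<epsilon> k" using that by (simp_all add: \<epsilon>_def le_imp_inverse_le)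
    then show ?thesis using N_peval_diff_le[OF h P P, of m n] unfolding X_def by linarith
  qed
  have "Cauchy X" using close \<epsilon>0 by (rule Cauchy_if_N_bound)
  then obtain y where y: "X \<longlonglongrightarrow> y" using Cauchy_convergent convergent_def by blast
  have y_close: "N (y - X k) \<le> 2 * \<epsilon> k" for k
  proof (rule tendsto_upperbound)
    show "(\<lambda>m. N (X m - X k)) \<longlonglongrightarrow> N (y - X k)" by (intro tendsto_N tendsto_diff y tendsto_const)
    show "\<forall>\<^sub>F m in sequentially. N (X m - X k) \<le> 2 * \<epsilon> k"
      using close[of k _ k] by (auto simp: eventually_sequentially)
  qed simp
  have "fun_calc h f y"
    unfolding fun_calc_def
  proof (intro allI impI)
    fix \<delta> :: real assume "\<delta> > 0"
    then obtain k where k: "2 * \<epsilon> k < \<delta>"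
      using order_tendstoD(2)[OF \<epsilon>0] by (auto simp: eventually_sequentially)
    have "\<epsilon> k \<le> 2 * \<epsilon> k" by (simp add: \<epsilon>_def)
    then have "poly_approx (N h) f (P k) \<delta>" using P[of k] k by (simp add: poly_approx_mono)
    moreover have "N (y - peval h (P k)) \<le> \<delta>" using y_close[of k] k unfolding X_def by simp
    ultimately show "\<exists>p. poly_approx (N h) f p \<delta> \<and> N (y - peval h p) \<le> \<delta>" by blast
  qed
  then show ?thesis by (rule that)
qed

section \<open>Kaplansky's theorem and square roots\<close>

lemma fun_calc_pos_neg_parts:
  assumes "selfadj a" "fun_calc a (\<lambda>t. max t 0) y" "fun_calc a (\<lambda>t. max (- t) 0) z"
  shows "y - z = a" and "z \<diamond> y = 0"
proof -
  show "y - z = a"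
    using fun_calc_unique[OF assms(1) fun_calc_cong[OF fun_calc_diff[OF assms(2,3)]] fun_calc_id]
    by simp
  have "continuous_on {-N a..N a} (\<lambda>t. max (- t) 0)" "continuous_on {-N a..N a} (\<lambda>t. max t 0)"
    by (intro continuous_intros)+
  then have "fun_calc a (\<lambda>t. 0) (z \<diamond> y)"
    by (intro fun_calc_mult_cong[OF assms(1,3,2)]) (auto simp: max_def)
  then show "z \<diamond> y = 0" using fun_calc_zero fun_calc_unique[OF assms(1)] by blast
qed

lemma selfadj_cube_eq_0:
  assumes "selfadj x" "x \<diamond> x \<diamond> x = 0"
  shows "x = 0"
proof -
  have "mpow x (2^2) = x \<diamond> (x \<diamond> x \<diamond> x)" by (simp add: numeral_eq_Suc m_e_right m_assoc)
  then have "N x ^ 4 = 0" using N_mpow_selfadj[OF assms(1), of 2] assms(2) by simp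
  then show ?thesis using N_eq_0_iff by simp
qed

text \<open>Kaplansky's argument: with \<open>a = b\<^sup>* b = a\<^sub>+ - a\<^sub>-\<close>, the element \<open>c = b a\<^sub>-\<close> satisfies
  \<open>c\<^sup>* c = a\<^sub>- a a\<^sub>- = -a\<^sub>-\<^sup>3 = -(a\<^sub>-\<^bsup>3/2\<^esup>)\<^sup>2\<close>, which forces \<open>c = 0\<close> and hence \<open>a\<^sub>- = 0\<close>.\<close>

lemma fun_calc_pos_part_adj_m_self: "fun_calc (adj b \<diamond> b) (\<lambda>t. max t 0) (adj b \<diamond> b)"
proof -
  define a where "a = adj b \<diamond> b"
  have sa: "selfadj a" unfolding a_def selfadj_def by (simp add: adj_m adj_adj)
  define neg where "neg t = max (- t) 0" for t :: real
  have cont: "continuous_on {-N a..N a} (\<lambda>t. max t 0)" "continuous_on {-N a..N a} neg"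
    "continuous_on {-N a..N a} (\<lambda>t. sqrt (neg t ^ 3))"
    "continuous_on {-N a..N a} (\<lambda>t. neg t * neg t)"
    unfolding neg_def by (intro continuous_intros)+
  obtain yp where yp: "fun_calc a (\<lambda>t. max t 0) yp" using fun_calc_exists[OF sa cont(1)] .
  obtain ym where ym: "fun_calc a neg ym" using fun_calc_exists[OF sa cont(2)] .
  obtain r where r: "fun_calc a (\<lambda>t. sqrt (neg t ^ 3)) r" using fun_calc_exists[OF sa cont(3)] .
  note parts = fun_calc_pos_neg_parts[OF sa yp ym[unfolded neg_def]]
  have sym: "selfadj ym" and sr: "selfadj r" using fun_calc_selfadj sa ym r by blast+
  have "fun_calc a (\<lambda>t. neg t * neg t) (ym \<diamond> ym)"
    by (rule fun_calc_mult_cong[OF sa ym ym cont(2) cont(2)]) simp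
  then have "fun_calc a (\<lambda>t. neg t ^ 3) (ym \<diamond> ym \<diamond> ym)"
    by (rule fun_calc_mult_cong[OF sa _ ym cont(4) cont(2)]) (simp add: power3_eq_cube)
  moreover have "fun_calc a (\<lambda>t. neg t ^ 3) (r \<diamond> r)"
    by (rule fun_calc_mult_cong[OF sa r r cont(3) cont(3)]) (simp add: neg_def)
  ultimately have cube: "r \<diamond> r = ym \<diamond> ym \<diamond> ym" using fun_calc_unique[OF sa] by blast
  have "adj (b \<diamond> ym) \<diamond> (b \<diamond> ym) = ym \<diamond> a \<diamond> ym"
    using sym unfolding a_def selfadj_def by (simp add: adj_m m_assoc)
  also have "\<dots> = - (r \<diamond> r)"
    unfolding parts(1)[symmetric] cube
    by (simp add: m_diff_left m_diff_right parts(2) m_assoc[symmetric] m_minus_left)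
  finally have c: "adj (b \<diamond> ym) \<diamond> (b \<diamond> ym) = - (r \<diamond> r)" .
  then have "b \<diamond> ym = 0" by (rule adj_m_self_eq_neg_square[OF sr])
  then have "ym \<diamond> ym \<diamond> ym = 0" using c cube by simp
  then have "ym = 0" by (rule selfadj_cube_eq_0[OF sym])
  then show ?thesis using yp parts(1) unfolding a_def by simp
qed

lemma positive_adj_m_self: "positive (adj b \<diamond> b)"
proof -
  have "selfadj (adj b \<diamond> b)" unfolding selfadj_def by (simp add: adj_m adj_adj)
  then show ?thesis
    by (rule fun_calc_positive[OF _ fun_calc_pos_part_adj_m_self, where T = "N (adj b \<diamond> b)"]) auto
qed

lemma adj_m_sum_eq_0:
  assumes "adj u \<diamond> u + adj v \<diamond> v = 0"
  shows "u = 0"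
proof -
  have "adj v \<diamond> v = - (adj u \<diamond> u)" using assms by (simp add: eq_neg_iff_add_eq_0 add.commute)
  then have "positive (- (adj u \<diamond> u))" using positive_adj_m_self[of v] by simp
  then have "adj u \<diamond> u = 0" using positive_antisym[OF positive_adj_m_self] by blast
  then have "N u ^ 2 = 0" using N_cstar[of u] by simp
  then show ?thesis using N_eq_0_iff by simp
qed

lemma square_root_exists:
  assumes "chi b = 0"
  obtains d where "chi d = 0" "(adj d \<diamond> d) \<diamond> (adj d \<diamond> d) = adj b \<diamond> b"
    "\<And>c. c \<diamond> (adj b \<diamond> b) = (adj b \<diamond> b) \<diamond> c \<Longrightarrow> c \<diamond> (adj d \<diamond> d) = (adj d \<diamond> d) \<diamond> c"
proof -
  define a where "a = adj b \<diamond> b"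
  have sa: "selfadj a" unfolding a_def selfadj_def by (simp add: adj_m adj_adj)
  have cha: "chi a = 0" unfolding a_def using assms by (simp add: chi_m)
  have cont: "continuous_on {-N a..N a} (\<lambda>t. sqrt (max t 0))"
    "continuous_on {-N a..N a} (\<lambda>t. sqrt (sqrt (max t 0)))"
    by (intro continuous_intros)+
  obtain s where s: "fun_calc a (\<lambda>t. sqrt (max t 0)) s" using fun_calc_exists[OF sa cont(1)] .
  obtain d where d: "fun_calc a (\<lambda>t. sqrt (sqrt (max t 0))) d" using fun_calc_exists[OF sa cont(2)] .
  have "fun_calc a (\<lambda>t. sqrt (max t 0)) (d \<diamond> d)"
    by (rule fun_calc_mult_cong[OF sa d d cont(2) cont(2)]) simp
  then have "d \<diamond> d = s" using fun_calc_unique[OF sa _ s] by blast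
  then have s_eq: "s = adj d \<diamond> d" using fun_calc_selfadj[OF d sa] unfolding selfadj_def by simp
  have "fun_calc a (\<lambda>t. max t 0) (s \<diamond> s)"
    by (rule fun_calc_mult_cong[OF sa s s cont(1) cont(1)]) simp
  then have "s \<diamond> s = a"
    using fun_calc_unique[OF sa _ fun_calc_pos_part_adj_m_self[of b, folded a_def]] by blast
  moreover have "chi d = 0" by (rule fun_calc_chi[OF d cha]) simp
  moreover have "c \<diamond> s = s \<diamond> c" if "c \<diamond> a = a \<diamond> c" for c by (rule fun_calc_commute[OF s that])
  ultimately show ?thesis using that s_eq unfolding a_def by blast
qed

lemma commuting_square_roots_eq:
  assumes sq: "s \<diamond> s = t \<diamond> t" and comm: "s \<diamond> t = t \<diamond> s"
    and s: "s = adj d \<diamond> d" and t: "t = adj d' \<diamond> d'"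
  shows "s = t"
proof -
  define z where "z = s - t"
  have sz: "adj z = z" unfolding z_def s t by (simp add: adj_diff adj_m adj_adj)
  have "z \<diamond> (s + t) = 0"
    unfolding z_def using sq comm by (simp add: m_add_right m_diff_left)
  moreover have "adj (d \<diamond> z) \<diamond> (d \<diamond> z) = z \<diamond> s \<diamond> z" "adj (d' \<diamond> z) \<diamond> (d' \<diamond> z) = z \<diamond> t \<diamond> z"
    using sz unfolding s t by (simp_all add: adj_m m_assoc)
  ultimately have "adj (d \<diamond> z) \<diamond> (d \<diamond> z) + adj (d' \<diamond> z) \<diamond> (d' \<diamond> z) = 0"
    by (simp add: m_add_left[symmetric] m_add_right[symmetric])
  then have "d \<diamond> z = 0" "d' \<diamond> z = 0"
    using adj_m_sum_eq_0 by (metis add.commute)+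
  then have "(s - t) \<diamond> z = 0" unfolding s t by (simp add: m_diff_left m_assoc)
  then have "z \<diamond> z = 0" by (simp only: z_def[symmetric])
  then have "N z ^ 2 = 0" using N_cstar[of z] sz by simp
  then show ?thesis unfolding z_def using N_eq_0_iff by simp
qed

lemma unique_square_root:
  assumes "chi b = 0"
  obtains d where "chi d = 0" "(adj d \<diamond> d) \<diamond> (adj d \<diamond> d) = adj b \<diamond> b"
    "\<And>d'. (adj d' \<diamond> d') \<diamond> (adj d' \<diamond> d') = adj b \<diamond> b \<Longrightarrow> adj d' \<diamond> d' = adj d \<diamond> d"
proof -
  obtain d where d: "chi d = 0" "(adj d \<diamond> d) \<diamond> (adj d \<diamond> d) = adj b \<diamond> b"
    and comm: "\<And>c. c \<diamond> (adj b \<diamond> b) = (adj b \<diamond> b) \<diamond> c \<Longrightarrow> c \<diamond> (adj d \<diamond> d) = (adj d \<diamond> d) \<diamond> c"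
    using square_root_exists[OF assms] by blast
  have "adj d' \<diamond> d' = adj d \<diamond> d" if "(adj d' \<diamond> d') \<diamond> (adj d' \<diamond> d') = adj b \<diamond> b" for d'
  proof (rule commuting_square_roots_eq)
    show "(adj d' \<diamond> d') \<diamond> (adj d' \<diamond> d') = (adj d \<diamond> d) \<diamond> (adj d \<diamond> d)" using that d(2) by simp
    define s' where "s' = adj d' \<diamond> d'"
    have "s' \<diamond> (adj b \<diamond> b) = (adj b \<diamond> b) \<diamond> s'"
      unfolding that[folded s'_def, symmetric] by (simp add: m_assoc)
    then show "(adj d' \<diamond> d') \<diamond> (adj d \<diamond> d) = (adj d \<diamond> d) \<diamond> (adj d' \<diamond> d')"
      unfolding s'_def by (rule comm)
  qed simp_all
  with d show ?thesis using that by blast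
qed

end

section \<open>C*-algebras and their unitization\<close>

locale cstar_alg =
  fixes sm :: "complex \<Rightarrow> 'a::{real_normed_algebra,banach} \<Rightarrow> 'a"
    and st :: "'a \<Rightarrow> 'a"
  assumes CA: "cstar_algebra sm st"
begin

lemmas CA_unfolded = CA[unfolded cstar_algebra_def complex_vs_def]

lemma sm_add: "sm c (x + y) = sm c x + sm c y"
  using CA_unfolded by metis

lemma sm_add_scalar: "sm (c + d) x = sm c x + sm d x"
  using CA_unfolded by metis

lemma sm_mult_scalar: "sm (c * d) x = sm c (sm d x)"
  using CA_unfolded by metis

lemma sm_one: "sm 1 x = x"
  using CA_unfolded by metis

lemma sm_of_real: "sm (complex_of_real r) x = scaleR r x"
  using CA_unfolded by metis

lemma sm_mult_left: "sm c (x * y) = sm c x * y"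
  using CA_unfolded by metis

lemma sm_mult_right: "sm c (x * y) = x * sm c y"
  using CA_unfolded by metis

lemma norm_sm: "norm (sm c x) = cmod c * norm x"
  using CA_unfolded by metis

lemma st_add: "st (x + y) = st x + st y"
  using CA_unfolded by metis

lemma st_sm: "st (sm c x) = sm (cnj c) (st x)"
  using CA_unfolded by metis

lemma st_mult: "st (x * y) = st y * st x"
  using CA_unfolded by metis

lemma st_st: "st (st x) = x"
  using CA_unfolded by metis

lemma norm_st_mult_self: "norm (st x * x) = (norm x)^2"
  using CA_unfolded by metis

lemma sm_zero_scalar[simp]: "sm 0 x = 0"
  using sm_add_scalar[of 0 0 x] by simp

lemma sm_zero[simp]: "sm c 0 = 0"
  using sm_add[of c 0 0] by simp

lemma sm_minus: "sm c (- x) = - sm c x"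
  using sm_add[of c x "-x"] by (simp add: eq_neg_iff_add_eq_0 add.commute)

lemma sm_minus_scalar: "sm (- c) x = - sm c x"
  using sm_add_scalar[of c "-c" x] by (simp add: eq_neg_iff_add_eq_0 add.commute)

lemma sm_diff: "sm c (x - y) = sm c x - sm c y"
  using sm_add[of c x "-y"] by (simp add: sm_minus)

lemma sm_diff_scalar: "sm (c - d) x = sm c x - sm d x"
  using sm_add_scalar[of c "-d" x] by (simp add: sm_minus_scalar)

lemma sm_scaleR: "sm c (scaleR r x) = scaleR r (sm c x)"
  using sm_mult_scalar[of c "of_real r" x] sm_mult_scalar[of "of_real r" c x] by (simp add: sm_of_real mult.commute)

lemma st_zero[simp]: "st 0 = 0"
  using st_add[of 0 0] by simp

lemma st_minus: "st (- x) = - st x"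
  using st_add[of x "-x"] by (simp add: eq_neg_iff_add_eq_0 add.commute)

lemma st_diff: "st (x - y) = st x - st y"
  using st_add[of x "-y"] by (simp add: st_minus)

lemma st_scaleR: "st (scaleR r x) = scaleR r (st x)"
  using st_sm[of "of_real r" x] by (simp add: sm_of_real)

lemma norm_st: "norm (st x) = norm x"
proof -
  have le: "norm y \<le> norm (st y)" for y
  proof (cases "y = 0")
    case False
    have "(norm y)^2 = norm (st y * y)" by (simp add: norm_st_mult_self)
    also have "\<dots> \<le> norm (st y) * norm y" by (rule norm_mult_ineq)
    finally have "norm y * norm y \<le> norm (st y) * norm y" by (simp add: power2_eq_square)
    then show ?thesis using False by simp
  qed simp
  show ?thesis using le[of x] le[of "st x"] by (simp add: st_st)
qed

text \<open>The unitization of \<open>A\<close> is \<open>\<complex> \<times> A\<close> with \<open>(\<lambda>, a) (\<mu>, b) = (\<lambda>\<mu>, \<lambda>b + \<mu>a + ab)\<close>. Its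
  C*-norm is \<open>max \<bar>\<lambda>\<bar> \<parallel>L\<^sub>(\<^sub>\<lambda>\<^sub>,\<^sub>a\<^sub>)\<parallel>\<close>, where \<open>L\<close> is left multiplication on \<open>A\<close>; the
  operator norm alone would vanish on \<open>(1, -u)\<close> if \<open>A\<close> had a unit \<open>u\<close>.\<close>

definition lmult :: "complex \<times> 'a \<Rightarrow> 'a \<Rightarrow> 'a" where
  "lmult w z = sm (fst w) z + snd w * z"

lemma lmult_bound: "norm (lmult w z) \<le> (cmod (fst w) + norm (snd w)) * norm z"
proof -
  have "norm (lmult w z) \<le> norm (sm (fst w) z) + norm (snd w * z)" unfolding lmult_def by (rule norm_triangle_ineq)
  also have "\<dots> \<le> cmod (fst w) * norm z + norm (snd w) * norm z"
    by (simp add: norm_sm norm_mult_ineq)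
  finally show ?thesis by (simp add: algebra_simps)
qed

lemma lmult_zero[simp]: "lmult w 0 = 0" unfolding lmult_def by simp

lemma lmult_scaleR: "lmult w (scaleR r z) = scaleR r (lmult w z)"
  unfolding lmult_def by (simp add: sm_scaleR scaleR_right_distrib)

definition op_norm :: "complex \<times> 'a \<Rightarrow> real" where
  "op_norm w = (SUP z\<in>{z. norm z \<le> 1}. norm (lmult w z))"

lemma op_norm_bdd: "bdd_above ((\<lambda>z. norm (lmult w z)) ` {z. norm z \<le> 1})"
proof (rule bdd_aboveI2)
  fix z assume z: "z \<in> {z::'a. norm z \<le> 1}"
  have "norm (lmult w z) \<le> (cmod (fst w) + norm (snd w)) * norm z" by (rule lmult_bound)
  also have "\<dots> \<le> (cmod (fst w) + norm (snd w)) * 1" by (rule mult_left_mono) (use z in auto)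
  finally show "norm (lmult w z) \<le> cmod (fst w) + norm (snd w)" by simp
qed

lemma op_norm_upper: "norm z \<le> 1 \<Longrightarrow> norm (lmult w z) \<le> op_norm w"
  unfolding op_norm_def by (rule cSUP_upper[OF _ op_norm_bdd]) simp

lemma op_norm_least: "(\<And>z. norm z \<le> 1 \<Longrightarrow> norm (lmult w z) \<le> c) \<Longrightarrow> op_norm w \<le> c"
  unfolding op_norm_def by (rule cSUP_least) (auto intro: exI[of _ 0])

lemma op_norm_nonneg: "0 \<le> op_norm w"
  using op_norm_upper[of 0 w] by simp

lemma op_norm_scale: "norm (lmult w z) \<le> op_norm w * norm z"
proof (cases "z = 0")
  case False
  define z' where "z' = scaleR (1 / norm z) z"
  have "norm z' \<le> 1" unfolding z'_def using False by simp
  then have "norm (lmult w z') \<le> op_norm w" by (rule op_norm_upper)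
  moreover have "norm (lmult w z') = norm (lmult w z) / norm z"
    unfolding z'_def lmult_scaleR using False by simp
  ultimately show ?thesis using False by (simp add: field_simps)
qed simp

lemma op_norm_bound: "op_norm w \<le> cmod (fst w) + norm (snd w)"
proof (rule op_norm_least)
  fix z :: 'a assume z: "norm z \<le> 1"
  have "norm (lmult w z) \<le> (cmod (fst w) + norm (snd w)) * norm z" by (rule lmult_bound)
  also have "\<dots> \<le> (cmod (fst w) + norm (snd w)) * 1" by (rule mult_left_mono) (use z in auto)
  finally show "norm (lmult w z) \<le> cmod (fst w) + norm (snd w)" by simp
qed

definition umult :: "complex \<times> 'a \<Rightarrow> complex \<times> 'a \<Rightarrow> complex \<times> 'a" where
  "umult w v = (fst w * fst v, sm (fst w) (snd v) + sm (fst v) (snd w) + snd w * snd v)"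

definition uone :: "complex \<times> 'a" where "uone = (1, 0)"

definition usmul :: "complex \<Rightarrow> complex \<times> 'a \<Rightarrow> complex \<times> 'a" where
  "usmul c w = (c * fst w, sm c (snd w))"

definition uadj :: "complex \<times> 'a \<Rightarrow> complex \<times> 'a" where
  "uadj w = (cnj (fst w), st (snd w))"

definition unorm :: "complex \<times> 'a \<Rightarrow> real" where
  "unorm w = max (cmod (fst w)) (op_norm w)"

lemmas sm_simps = sm_add sm_add_scalar sm_mult_scalar[symmetric] sm_one sm_mult_left[symmetric] sm_mult_right[symmetric]
  sm_diff sm_diff_scalar sm_minus sm_minus_scalar

lemma lmult_umult: "lmult (umult w v) z = lmult w (lmult v z)"
  unfolding lmult_def umult_def by (simp add: sm_simps algebra_simps mult.commute)

lemma lmult_add: "lmult (w + v) z = lmult w z + lmult v z"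
  unfolding lmult_def by (simp add: sm_simps algebra_simps)

lemma lmult_usmul: "lmult (usmul c w) z = sm c (lmult w z)"
  unfolding lmult_def usmul_def by (simp add: sm_simps algebra_simps)

lemma lmult_embed: "lmult (0, a) z = a * z"
  unfolding lmult_def by simp

lemma op_norm_add: "op_norm (w + v) \<le> op_norm w + op_norm v"
proof (rule op_norm_least)
  fix z :: 'a assume z: "norm z \<le> 1"
  have "norm (lmult (w + v) z) \<le> norm (lmult w z) + norm (lmult v z)" unfolding lmult_add by (rule norm_triangle_ineq)
  also have "\<dots> \<le> op_norm w + op_norm v" using op_norm_upper[OF z] by (simp add: add_mono)
  finally show "norm (lmult (w + v) z) \<le> op_norm w + op_norm v" .
qed

lemma usmul_usmul: "usmul c (usmul d w) = usmul (c * d) w"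
  unfolding usmul_def by (simp add: sm_mult_scalar mult.assoc)

lemma usmul_one: "usmul 1 w = w"
  unfolding usmul_def by (simp add: sm_one)

lemma op_norm_usmul_le: "op_norm (usmul c w) \<le> cmod c * op_norm w"
proof (rule op_norm_least)
  fix z :: 'a assume z: "norm z \<le> 1"
  have "norm (lmult (usmul c w) z) = cmod c * norm (lmult w z)" unfolding lmult_usmul by (rule norm_sm)
  also have "\<dots> \<le> cmod c * op_norm w" using op_norm_upper[OF z] by (simp add: mult_left_mono)
  finally show "norm (lmult (usmul c w) z) \<le> cmod c * op_norm w" .
qed

lemma op_norm_usmul: "op_norm (usmul c w) = cmod c * op_norm w"
proof (cases "c = 0")
  case True
  have "op_norm (usmul c w) \<le> 0" using op_norm_usmul_le[of c w] True by simp
  then show ?thesis using op_norm_nonneg True by (simp add: order_antisym)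
next
  case False
  have "op_norm w = op_norm (usmul (inverse c) (usmul c w))" using False by (simp add: usmul_usmul usmul_one)
  also have "\<dots> \<le> cmod (inverse c) * op_norm (usmul c w)" by (rule op_norm_usmul_le)
  finally have h: "op_norm w \<le> cmod (inverse c) * op_norm (usmul c w)" .
  have "cmod c * op_norm w \<le> cmod c * (cmod (inverse c) * op_norm (usmul c w))"
    by (rule mult_left_mono[OF h]) simp
  also have "\<dots> = op_norm (usmul c w)" using False by (simp add: norm_inverse)
  finally have "cmod c * op_norm w \<le> op_norm (usmul c w)" .
  then show ?thesis using op_norm_usmul_le[of c w] by simp
qed

lemma op_norm_umult: "op_norm (umult w v) \<le> op_norm w * op_norm v"
proof (rule op_norm_least)
  fix z :: 'a assume z: "norm z \<le> 1"
  have "norm (lmult (umult w v) z) = norm (lmult w (lmult v z))" by (simp add: lmult_umult)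
  also have "\<dots> \<le> op_norm w * norm (lmult v z)" by (rule op_norm_scale)
  also have "\<dots> \<le> op_norm w * op_norm v" using op_norm_upper[OF z] op_norm_nonneg by (simp add: mult_left_mono)
  finally show "norm (lmult (umult w v) z) \<le> op_norm w * op_norm v" .
qed

lemma st_lmult: "st (lmult w z) * x = st z * lmult (uadj w) x"
  unfolding lmult_def uadj_def by (simp add: st_add st_sm st_mult sm_simps algebra_simps)

lemma uadj_uadj: "uadj (uadj w) = w"
  unfolding uadj_def by (simp add: st_st)

lemma op_norm_uadj_ge: "(op_norm w)^2 \<le> op_norm (umult (uadj w) w)"
proof -
  have "norm (lmult w z) \<le> sqrt (op_norm (umult (uadj w) w))" if z: "norm z \<le> 1" for z
  proof -
    have "(norm (lmult w z))^2 = norm (st (lmult w z) * lmult w z)" by (simp add: norm_st_mult_self)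
    also have "\<dots> = norm (st z * lmult (umult (uadj w) w) z)" by (simp add: st_lmult lmult_umult)
    also have "\<dots> \<le> norm (st z) * norm (lmult (umult (uadj w) w) z)" by (rule norm_mult_ineq)
    also have "\<dots> \<le> 1 * op_norm (umult (uadj w) w)"
      using z op_norm_upper[OF z] by (intro mult_mono) (auto simp: norm_st)
    finally have "(norm (lmult w z))^2 \<le> op_norm (umult (uadj w) w)" by simp
    then show ?thesis by (simp add: real_le_rsqrt)
  qed
  then have "op_norm w \<le> sqrt (op_norm (umult (uadj w) w))" by (rule op_norm_least)
  then show ?thesis using op_norm_nonneg by (metis power2_le_imp_le real_sqrt_le_iff real_sqrt_pow2 op_norm_nonneg power_mono)
qed

lemma op_norm_uadj: "op_norm (uadj w) = op_norm w"
proof -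
  have le: "op_norm v \<le> op_norm (uadj v)" for v
  proof (cases "op_norm v = 0")
    case False
    have "(op_norm v)^2 \<le> op_norm (uadj v) * op_norm v"
      using op_norm_uadj_ge[of v] op_norm_umult[of "uadj v" v] by simp
    then show ?thesis using False op_norm_nonneg[of v] by (simp add: power2_eq_square)
  qed (simp add: op_norm_nonneg)
  show ?thesis using le[of w] le[of "uadj w"] by (simp add: uadj_uadj)
qed

lemma op_norm_cstar: "op_norm (umult (uadj w) w) = (op_norm w)^2"
  using op_norm_uadj_ge[of w] op_norm_umult[of "uadj w" w] by (simp add: op_norm_uadj power2_eq_square)

lemma op_norm_embed: "op_norm (0, a) = norm a"
proof (rule order_antisym)
  show "op_norm (0, a) \<le> norm a" using op_norm_bound[of "(0, a)"] by simp
  show "norm a \<le> op_norm (0, a)"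
  proof (cases "a = 0")
    case False
    define z where "z = scaleR (1 / norm a) (st a)"
    have "norm z \<le> 1" unfolding z_def using False by (simp add: norm_st)
    then have "norm (lmult (0, a) z) \<le> op_norm (0, a)" by (rule op_norm_upper)
    moreover have "norm (lmult (0, a) z) = norm a"
    proof -
      have "norm (a * st a) = (norm (st a))^2" using norm_st_mult_self[of "st a"] by (simp add: st_st)
      then show ?thesis unfolding lmult_embed z_def using False
        by (simp add: norm_st power2_eq_square)
    qed
    ultimately show ?thesis by simp
  qed (simp add: op_norm_nonneg)
qed

lemma op_norm_scalar: "op_norm (l, 0) \<le> cmod l"
  using op_norm_bound[of "(l, 0)"] by simp

lemma norm_snd_le_op_norm: "norm (snd w) \<le> op_norm w + cmod (fst w)"
proof -
  have "(0, snd w) = w + (- fst w, 0)" by (simp add: prod_eq_iff)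
  then have "op_norm (0, snd w) \<le> op_norm w + op_norm (- fst w, 0)" using op_norm_add by metis
  then show ?thesis using op_norm_embed op_norm_scalar[of "- fst w"] by simp
qed

lemma unorm_triangle: "unorm (x + y) \<le> unorm x + unorm y"
  unfolding unorm_def using op_norm_add[of x y] norm_triangle_ineq[of "fst x" "fst y"] by auto

lemma unorm_usmul: "unorm (usmul c x) = cmod c * unorm x"
  unfolding unorm_def op_norm_usmul by (simp add: usmul_def norm_mult max_mult_distrib_left)

lemma unorm_umult: "unorm (umult x y) \<le> unorm x * unorm y"
proof -
  have "cmod (fst (umult x y)) \<le> unorm x * unorm y"
    unfolding umult_def unorm_def by (simp add: norm_mult, rule mult_mono) (simp_all add: le_max_iff_disj)
  moreover have "op_norm (umult x y) \<le> unorm x * unorm y"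
    unfolding unorm_def using op_norm_umult[of x y] op_norm_nonneg[of x] op_norm_nonneg[of y]
    by (meson max.cobounded2 mult_mono order_trans norm_ge_zero max.coboundedI1)
  ultimately show ?thesis unfolding unorm_def by simp
qed

lemma unorm_cstar: "unorm (umult (uadj x) x) = (unorm x)^2"
proof -
  have "cmod (fst (umult (uadj x) x)) = (cmod (fst x))^2"
    unfolding umult_def uadj_def by (simp add: norm_mult power2_eq_square)
  then show ?thesis unfolding unorm_def op_norm_cstar
    using op_norm_nonneg[of x] by (simp add: max_def power_mono)
qed

lemma unorm_uone: "unorm uone = 1"
  unfolding unorm_def uone_def using op_norm_scalar[of 1] op_norm_nonneg by (simp add: max_def)

lemma norm_le_unorm: "1/3 * norm x \<le> unorm x"
proof -
  have "norm x \<le> cmod (fst x) + norm (snd x)" using norm_Pair_le[of "fst x" "snd x"] by simp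
  also have "\<dots> \<le> 3 * unorm x" unfolding unorm_def using norm_snd_le_op_norm[of x] by simp
  finally show ?thesis by simp
qed

lemma unorm_le_norm: "unorm x \<le> 2 * norm x"
proof -
  have "cmod (fst x) \<le> norm x" "norm (snd x) \<le> norm x"
    using norm_fst_le[of "fst x" "snd x"] norm_snd_le[of "snd x" "fst x"] by simp_all
  then show ?thesis unfolding unorm_def using op_norm_bound[of x] norm_ge_zero[of x]
    by (simp only: max.bounded_iff) linarith
qed

lemma unital_cstar_unitization: "unital_cstar umult uone usmul uadj unorm fst (1/3) 2"
proof (unfold_locales, goal_cases)
  case 1 show ?case unfolding umult_def by (simp add: sm_simps algebra_simps mult.commute mult.left_commute)
  case 2 show ?case unfolding umult_def by (simp add: sm_simps algebra_simps)
  case 3 show ?case unfolding umult_def by (simp add: sm_simps algebra_simps)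
  case 4 show ?case unfolding umult_def uone_def by (simp add: sm_simps)
  case 5 show ?case unfolding umult_def uone_def by (simp add: sm_simps)
  case 6 show ?case unfolding usmul_def by (simp add: sm_simps algebra_simps)
  case 7 show ?case unfolding usmul_def by (simp add: sm_simps algebra_simps)
  case 8 show ?case unfolding usmul_def by (simp add: sm_simps algebra_simps)
  case 9 show ?case unfolding usmul_def by (simp add: sm_simps)
  case 10 show ?case unfolding usmul_def by (simp add: sm_of_real scaleR_conv_of_real prod_eq_iff)
  case 11 show ?case
    unfolding usmul_def umult_def by (simp add: sm_simps algebra_simps mult.commute mult.left_commute)
  case 12 show ?case
    unfolding usmul_def umult_def by (simp add: sm_simps algebra_simps mult.commute mult.left_commute)
  case 13 show ?case unfolding uadj_def by (simp add: st_add)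
  case 14 show ?case unfolding uadj_def usmul_def by (simp add: st_sm)
  case 15 show ?case unfolding uadj_def umult_def by (simp add: st_add st_sm st_mult sm_simps algebra_simps)
  case 16 show ?case by (rule uadj_uadj)
  case 17 show ?case by (rule unorm_triangle)
  case 18 show ?case by (rule unorm_usmul)
  case 19 show ?case by (rule unorm_umult)
  case 20 show ?case by (rule unorm_cstar)
  case 21 show ?case by (rule unorm_uone)
  case 22 show ?case by simp
  case 23 show ?case by (rule norm_le_unorm)
  case 24 show ?case by (rule unorm_le_norm)
  case 25 show ?case by simp
  case 26 show ?case unfolding umult_def by simp
  case 27 show ?case unfolding usmul_def by simp
  case 28 show ?case unfolding uone_def by simp
  case 29 show ?case unfolding unorm_def by simp
qed

lemma embed_umult: "umult (0, x) (0, y) = (0, x * y)"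
  unfolding umult_def by simp

lemma embed_uadj: "uadj (0, x) = (0, st x)"
  unfolding uadj_def by simp

lemma cstar_positive_sqrt_ex1:
  assumes "cstar_positive st p"
  shows "\<exists>!s. cstar_positive st s \<and> s * s = p"
proof -
  interpret U: unital_cstar umult uone usmul uadj unorm fst "1/3" 2
    by (rule unital_cstar_unitization)
  obtain b where b: "p = st b * b" using assms cstar_positive_def by blast
  obtain d where d: "fst d = 0" "umult (umult (uadj d) d) (umult (uadj d) d) = (0, p)"
    and unique: "\<And>d'. umult (umult (uadj d') d') (umult (uadj d') d') = (0, p) \<Longrightarrow>
      umult (uadj d') d' = umult (uadj d) d"
    using U.unique_square_root[of "(0, b)"] unfolding b embed_uadj embed_umult by auto
  define s where "s = st (snd d) * snd d"
  have d_s: "umult (uadj d) d = (0, s)"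
    using d(1) unfolding s_def by (metis embed_uadj embed_umult prod.collapse)
  show ?thesis
  proof (rule ex1I[of _ s])
    show "cstar_positive st s \<and> s * s = p"
      using d(2) unfolding d_s embed_umult cstar_positive_def s_def by auto
    fix s' assume s': "cstar_positive st s' \<and> s' * s' = p"
    then obtain d' where d': "s' = st d' * d'" unfolding cstar_positive_def by blast
    have "(0, s') = (0, s)"
      using unique[of "(0, d')"] s' unfolding d_s embed_uadj embed_umult d' by simp
    then show "s' = s" by simp
  qed
qed

lemma cstar_sqrt:
  assumes "cstar_positive st p"
  shows "cstar_positive st (cstar_sqrt st p)" and "cstar_sqrt st p * cstar_sqrt st p = p"
  using theI'[OF cstar_positive_sqrt_ex1[OF assms]] unfolding cstar_sqrt_def by auto

lemma cstar_sqrt_eq: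
  assumes "cstar_positive st p" "cstar_positive st s" "s * s = p"
  shows "cstar_sqrt st p = s"
  unfolding cstar_sqrt_def using cstar_positive_sqrt_ex1[OF assms(1)] assms(2,3)
  by (intro the1_equality) auto

lemma cstar_positive_scaleR:
  assumes "cstar_positive st s" "0 \<le> r"
  shows "cstar_positive st (scaleR r s)"
proof -
  obtain d where d: "s = st d * d" using assms cstar_positive_def by blast
  have "scaleR r s = st (scaleR (sqrt r) d) * (scaleR (sqrt r) d)"
    unfolding d using assms(2) by (simp add: st_scaleR)
  then show ?thesis unfolding cstar_positive_def by blast
qed

lemma cstar_sqrt_eq_scaleR_iff:
  assumes p: "cstar_positive st p" and q: "cstar_positive st q" and "0 \<le> r"
  shows "cstar_sqrt st q = scaleR r (cstar_sqrt st p) \<longleftrightarrow> q = scaleR (r^2) p"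
proof
  assume "cstar_sqrt st q = scaleR r (cstar_sqrt st p)"
  then show "q = scaleR (r^2) p"
    using cstar_sqrt(2)[OF p] cstar_sqrt(2)[OF q] by (metis mult_scaleR_left mult_scaleR_right power2_eq_square scaleR_scaleR)
next
  assume "q = scaleR (r^2) p"
  then show "cstar_sqrt st q = scaleR r (cstar_sqrt st p)"
    using cstar_sqrt[OF p] assms(3) q
    by (intro cstar_sqrt_eq cstar_positive_scaleR) (auto simp: power2_eq_square)
qed

end

section \<open>Inner product modules\<close>

locale ip_mod = cstar_alg sm st
  for sm :: "complex \<Rightarrow> 'a::{real_normed_algebra,banach} \<Rightarrow> 'a" and st +
  fixes smX :: "complex \<Rightarrow> 'x::ab_group_add \<Rightarrow> 'x" and act :: "'x \<Rightarrow> 'a \<Rightarrow> 'x"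
    and ip :: "'x \<Rightarrow> 'x \<Rightarrow> 'a"
  assumes IM: "ip_module sm st smX act ip"
begin

lemmas IM_unfolded = IM[unfolded ip_module_def complex_vs_def]

lemma ip_add_right: "ip x (y + z) = ip x y + ip x z" using IM_unfolded by metis
lemma ip_smX_right: "ip x (smX c y) = sm c (ip x y)" using IM_unfolded by metis
lemma ip_act_right: "ip x (act y a) = ip x y * a" using IM_unfolded by metis
lemma ip_swap: "ip x y = st (ip y x)" using IM_unfolded by metis
lemma ip_self_positive: "cstar_positive st (ip x x)" using IM_unfolded by metis
lemma ip_self_eq_0_iff: "ip x x = 0 \<longleftrightarrow> x = 0" using IM_unfolded by metis

lemma ip_zero_right: "ip x 0 = 0"
  using ip_add_right[of x 0 0] by simp

lemma ip_minus_right: "ip x (- y) = - ip x y"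
  using ip_add_right[of x y "-y"] by (simp add: ip_zero_right eq_neg_iff_add_eq_0 add.commute)

lemma ip_diff_right: "ip x (y - z) = ip x y - ip x z"
  using ip_add_right[of x y "-z"] by (simp add: ip_minus_right)

lemma ip_add_left: "ip (x + y) z = ip x z + ip y z"
  by (metis ip_swap ip_add_right st_add)

lemma ip_diff_left: "ip (x - y) z = ip x z - ip y z"
  by (metis ip_swap ip_diff_right st_diff)

lemma ip_smX_left: "ip (smX c x) y = sm (cnj c) (ip x y)"
  by (metis ip_swap ip_smX_right st_sm)

lemma ip_act_left: "ip (act x a) y = st a * ip x y"
  by (metis ip_swap ip_act_right st_mult)

lemma eq_if_ip_eq:
  assumes "ip u u = ip v u" "ip u v = ip v v"
  shows "u = v"
proof -
  have "ip (u - v) (u - v) = 0"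
    using assms by (simp add: ip_diff_left ip_diff_right)
  then show ?thesis using ip_self_eq_0_iff by simp
qed

lemma ip_expand:
  "ip (u + smX c v) (u + smX c v) = ip u u + sm c (ip u v) + sm (cnj c) (ip v u) + sm (cnj c * c) (ip v v)"
  by (simp add: ip_add_left ip_add_right ip_smX_left ip_smX_right sm_mult_scalar sm_add algebra_simps)

lemma polarization:
  "scaleR 4 (ip u v) =
     ip (u + smX 1 v) (u + smX 1 v) - ip (u + smX (-1) v) (u + smX (-1) v)
     + sm (- \<i>) (ip (u + smX \<i> v) (u + smX \<i> v) - ip (u + smX (- \<i>) v) (u + smX (- \<i>) v))"
proof -
  have "scaleR 4 (ip u v) = scaleR (1 + 1 + 1 + 1) (ip u v)" by simp
  also have "\<dots> = ip u v + ip u v + ip u v + ip u v" by (simp only: scaleR_left_distrib scaleR_one)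
  also have "\<dots> = ip (u + smX 1 v) (u + smX 1 v) - ip (u + smX (-1) v) (u + smX (-1) v)
     + sm (- \<i>) (ip (u + smX \<i> v) (u + smX \<i> v) - ip (u + smX (- \<i>) v) (u + smX (- \<i>) v))"
    unfolding ip_expand
    by (simp add: sm_diff sm_add sm_mult_scalar[symmetric] sm_minus_scalar sm_one algebra_simps)
  finally show ?thesis .
qed

end

locale ip_module_pair = X: ip_mod sm st smX actX ipX + Y: ip_mod sm st smY actY ipY
  for sm st smX actX ipX smY actY ipY
begin

lemma Alinear_if_scaled_ip:
  assumes T: "\<And>x y. ipY (T x) (T y) = scaleR c (ipX x y)"
  shows "Alinear_map smX actX smY actY T"
  unfolding Alinear_map_def clinear_map_def
proof (intro conjI allI)
  show "T (x + y) = T x + T y" for x y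
    by (rule Y.eq_if_ip_eq)
      (simp_all add: T Y.ip_add_left Y.ip_add_right X.ip_add_left X.ip_add_right scaleR_right_distrib)
  show "T (smX a x) = smY a (T x)" for a x
    by (rule Y.eq_if_ip_eq)
      (simp_all add: T Y.ip_smX_left Y.ip_smX_right X.ip_smX_left X.ip_smX_right X.sm_scaleR
        X.sm_mult_scalar[symmetric] mult.commute)
  show "T (actX x a) = actY (T x) a" for x a
    by (rule Y.eq_if_ip_eq)
      (simp_all add: T Y.ip_act_left Y.ip_act_right X.ip_act_left X.ip_act_right mult.assoc)
qed

lemma scaled_ip_if_clinear:
  assumes lin: "clinear_map smX smY T" and T: "\<And>x. ipY (T x) (T x) = scaleR c (ipX x x)"
  shows "ipY (T x) (T y) = scaleR c (ipX x y)"
proof -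
  have T_comb: "T x + smY a (T y) = T (x + smX a y)" for a
    using lin unfolding clinear_map_def by simp
  have "scaleR 4 (ipY (T x) (T y)) = scaleR c (scaleR 4 (ipX x y))"
    unfolding Y.polarization X.polarization T_comb T
    by (simp add: scaleR_right_diff_distrib scaleR_right_distrib X.sm_scaleR X.sm_diff)
  also have "\<dots> = scaleR 4 (scaleR c (ipX x y))" by (simp add: mult.commute)
  finally show ?thesis by (rule scaleR_left_imp_eq[rotated]) simp
qed

lemma mod_abs_scaled_iff:
  assumes "0 \<le> \<gamma>"
  shows "mod_abs st ipY y = scaleR \<gamma> (mod_abs st ipX x) \<longleftrightarrow> ipY y y = scaleR (\<gamma>\<^sup>2) (ipX x x)"
  unfolding mod_abs_def
  using X.cstar_sqrt_eq_scaleR_iff[OF X.ip_self_positive Y.ip_self_positive assms] .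

end

theorem theorem4p6:
  fixes sm :: "complex \<Rightarrow> 'a::{real_normed_algebra,banach} \<Rightarrow> 'a"
    and st :: "'a \<Rightarrow> 'a"
    and smX :: "complex \<Rightarrow> 'x::ab_group_add \<Rightarrow> 'x" and actX :: "'x \<Rightarrow> 'a \<Rightarrow> 'x"
    and ipX :: "'x \<Rightarrow> 'x \<Rightarrow> 'a"
    and smY :: "complex \<Rightarrow> 'y::ab_group_add \<Rightarrow> 'y" and actY :: "'y \<Rightarrow> 'a \<Rightarrow> 'y"
    and ipY :: "'y \<Rightarrow> 'y \<Rightarrow> 'a"
    and T :: "'x \<Rightarrow> 'y" and \<gamma> :: real
  assumes "cstar_algebra sm st"
    and "ip_module sm st smX actX ipX"
    and "ip_module sm st smY actY ipY"
    and "\<exists>x. T x \<noteq> 0"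
    and "\<gamma> > 0"
  shows "((\<forall>x y. ipY (T x) (T y) = scaleR (\<gamma>\<^sup>2) (ipX x y))
            \<longleftrightarrow> (Alinear_map smX actX smY actY T \<and>
                 (\<forall>x. mod_abs st ipY (T x) = scaleR \<gamma> (mod_abs st ipX x))))
       \<and> ((Alinear_map smX actX smY actY T \<and>
                 (\<forall>x. mod_abs st ipY (T x) = scaleR \<gamma> (mod_abs st ipX x)))
            \<longleftrightarrow> (clinear_map smX smY T \<and>
                 (\<forall>x. mod_abs st ipY (T x) = scaleR \<gamma> (mod_abs st ipX x))))"
proof -
  interpret ip_module_pair sm st smX actX ipX smY actY ipY
    using assms(1-3) by (simp add: ip_module_pair_def ip_mod_def ip_mod_axioms_def cstar_alg_def)
  have mod_abs_iff: "(\<forall>x. mod_abs st ipY (T x) = scaleR \<gamma> (mod_abs st ipX x))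
      \<longleftrightarrow> (\<forall>x. ipY (T x) (T x) = scaleR (\<gamma>\<^sup>2) (ipX x x))"
    using mod_abs_scaled_iff assms(5) by simp
  show ?thesis
    unfolding mod_abs_iff
    using Alinear_if_scaled_ip scaled_ip_if_clinear unfolding Alinear_map_def by blast
qed

end
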